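(* Let $E\subset\mathbb R$ be a compact interval, $b:[0,T]\times E\to\mathbb R$ continuous, $Z^{t,z}_s=z+\int_t^s b(r,Z^{t,z}_r)dr$ staying in $E$, and consider $$\frac{\partial}{\partial t}u(t,z)+b(t,z)\frac{\partial}{\partial z}u(t,z)+g^z(t,u_t)=0,\qquad u(T,z)=h(z)\ \ \forall z\in E,$$ under the assumptions: (a-1) $b$ is locally Lipschitz-continuous; (a-2) $g:[0,T]\times\mathcal C_b(E)\to\mathcal C_b(E)$ satisfies $\|g(t,v_1)-g(t,v_2)\|_\infty\le L\|v_1-v_2\|_\infty$ for some $L<\infty$ and all $t,v_1,v_2$; (a-3) $h\in\mathcal C_b(E)$; and additionally (b-1) $b$ has a uniformly bounded continuous derivative $\partial b/\partial z$; (b-2) for every $v\in\mathcal C^1_b(E)$, $g^z(t,v)$ is differentiable in $z$ with $\frac{\partial}{\partial z}g^z(t,v)=\hat g^z(t,\frac{\partial}{\partial z}v)$ for some continuous function $\hat g:[0,T]\times\mathcal C_b(E)\to\mathcal C_b(E)$ such that there are constants $L',K$ with $\|\hat g(s,v_s)\|_\infty\le L'\|v_s\|_\infty+K$, and such that for every $R>0$, $\hat g$ is uniformly continuous on $[0,T]\times\mathcal C^R_b(E)\times E$ where $\mathcal C^R_b(E)=\{v\in\mathcal C_b(E):\|v\|_\infty\le R\}$; (b-3) $h\in\mathcal C^1_b(E)$. Then the unique weak (distributional) solution $\hat u\in\mathcal C_b([0,T]\times E)$, given by $\hat u(t,z)=h(Z^{t,z}_T)+\int_t^Tg^{Z^{t,z}_s}(s,\hat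 u_s)ds$, is differentiable in the space variable and is therefore also the strong solution of the boundary problem.
   Context: $u_t=u(t,\cdot)$; $g^z(t,v)$ denotes the value at $z\in E$ of $g(t,v)\in\mathcal C_b(E)$, similarly $\hat g^z$. $\mathcal C_b(E)$ and $\mathcal C^1_b(E)$ are the bounded continuous, resp. bounded continuously differentiable with bounded derivative, functions on $E$; $\|\cdot\|_\infty$ is the sup norm. *)

theory Defs
  imports "HOL-Analysis.Analysis"
begin

text \<open>Functions on the compact set E are represented as total functions real => real;
only their values on E matter.  Since E is compact, C_b(E) is just C(E).\<close>

definition Cb :: "real set \<Rightarrow> (real \<Rightarrow> real) set" where
  "Cb E = {v. continuous_on E v}"

definition supE :: "real set \<Rightarrow> (real \<Rightarrow> real) \<Rightarrow> real" where
  "supE E v = (SUP z\<in>E. \<bar>v z\<bar>)"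

definition C1b_deriv :: "real set \<Rightarrow> (real \<Rightarrow> real) \<Rightarrow> (real \<Rightarrow> real) \<Rightarrow> bool" where
  "C1b_deriv E v v' \<longleftrightarrow> continuous_on E v \<and> continuous_on E v' \<and>
     (\<exists>M. \<forall>z\<in>E. \<bar>v' z\<bar> \<le> M) \<and>
     (\<forall>z\<in>E. (v has_real_derivative v' z) (at z within E))"

end

theory Submission
  imports Defs
begin

text \<open>Along the characteristics \<open>Z\<close> the representation formula expresses \<open>u t y - u t l\<close>
  through \<open>h\<close> and \<open>g\<close>.  Differentiating it formally in \<open>y\<close>, with the derivative of the flow
  \<open>dZ = exp (\<integral> \<partial>\<^sub>z b)\<close> and (b-2) for the derivative of \<open>g\<close>, gives a fixed-point equation
  \<open>d = Phi d\<close> for the spatial derivative.  Its Picard iterates \<open>d\<^sub>n\<close> are exact derivatives of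
  explicit functions \<open>w\<^sub>n\<close>, and the Lipschitz bound (a-2) yields
  \<open>\<bar>u t y - u t l - w\<^sub>n t y\<bar> \<le> 2 U (2 L (T - t))\<^sup>n / n!\<close>, where \<open>U\<close> bounds \<open>\<bar>u\<bar>\<close>.
  The uniform continuity in (b-2) makes the \<open>d\<^sub>n\<close> equicontinuous, so the \<open>w\<^sub>n\<close> are
  differentiable uniformly in \<open>n\<close>; hence the \<open>d\<^sub>n\<close> converge uniformly and their limit is
  \<open>\<partial>\<^sub>z u\<close>.  Finally, the defect \<open>u t z - h z - \<integral>\<^sub>t\<^sup>T (b \<partial>\<^sub>z u + g)\<close> has increments
  \<open>o(\<tau> - t)\<close>: comparing \<open>u\<close> along the characteristic from \<open>(t, z)\<close> with \<open>u\<close> at the point \<open>z\<close>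
  costs only the first-order Taylor remainder of \<open>u \<tau>\<close>.  So the defect is constant, and it
  vanishes at \<open>T\<close>.\<close>

lemma abs_integral_le:
  fixes f :: "real \<Rightarrow> real"
  assumes "a \<le> b" "f integrable_on {a..b}" "\<And>x. x \<in> {a..b} \<Longrightarrow> \<bar>f x\<bar> \<le> M"
  shows "\<bar>integral {a..b} f\<bar> \<le> M * (b - a)"
proof -
  have "0 \<le> M" using assms(1) assms(3)[of a] by auto
  then have "norm (integral {a..b} f) \<le> M * (b - a)"
    using has_integral_bound[OF \<open>0 \<le> M\<close>, of f "integral {a..b} f" a b] assms
    by (simp add: integrable_integral)
  then show ?thesis by simp
qed

lemma abs_integral_diff_le:
  fixes f g :: "real \<Rightarrow> real"
  assumes "a \<le> b" "f integrable_on {a..b}" "g integrable_on {a..b}"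
    and "\<And>x. x \<in> {a..b} \<Longrightarrow> \<bar>f x - g x\<bar> \<le> M"
  shows "\<bar>integral {a..b} f - integral {a..b} g\<bar> \<le> M * (b - a)"
  using abs_integral_le[of a b "\<lambda>x. f x - g x" M] assms by (simp add: integrable_diff integral_diff)

lemma integral_upper_limit_lipschitz:
  fixes f :: "real \<Rightarrow> real"
  assumes f: "f integrable_on {a..b}" and M: "\<And>\<xi>. \<xi> \<in> {a..b} \<Longrightarrow> \<bar>f \<xi>\<bar> \<le> M"
    and x: "x \<in> {a..b}" "x' \<in> {a..b}"
  shows "\<bar>integral {a..x'} f - integral {a..x} f\<bar> \<le> M * \<bar>x' - x\<bar>"
proof -
  have *: "\<bar>integral {a..y'} f - integral {a..y} f\<bar> \<le> M * (y' - y)"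
    if y: "y \<in> {a..b}" "y' \<in> {a..b}" "y \<le> y'" for y y'
  proof -
    have fy': "f integrable_on {a..y'}" by (rule integrable_subinterval_real[OF f]) (use y in auto)
    have "integral {a..y'} f - integral {a..y} f = integral {y..y'} f"
      using Henstock_Kurzweil_Integration.integral_combine[where a=a and c=y and b=y' and f=f] fy' y
      by simp
    also have "\<bar>\<dots>\<bar> \<le> M * (y' - y)"
      by (rule abs_integral_le) (use y M in \<open>auto intro: integrable_subinterval_real[OF f]\<close>)
    finally show ?thesis .
  qed
  show ?thesis
    using *[of x x'] *[of x' x] x by (cases "x \<le> x'") (auto simp: abs_minus_commute)
qed

lemma compact_uniformly_continuous_realE:
  fixes f :: "real \<Rightarrow> real"
  assumes "compact S" "continuous_on S f" "e > 0"
  obtains d where "d > 0" "\<And>x x'. x \<in> S \<Longrightarrow> x' \<in> S \<Longrightarrow> \<bar>x - x'\<bar> < d \<Longrightarrow> \<bar>f x - f x'\<bar> < e"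
  using compact_uniformly_continuous[OF assms(2,1)] assms(3)
  unfolding uniformly_continuous_on_def dist_real_def by metis

lemma compact_uniformly_continuous_pairE:
  fixes f :: "real \<times> real \<Rightarrow> real"
  assumes "compact S" "continuous_on S f" "e > 0"
  obtains d where "d > 0"
    "\<And>a b a' b'. (a, b) \<in> S \<Longrightarrow> (a', b') \<in> S \<Longrightarrow> \<bar>a - a'\<bar> < d \<Longrightarrow> \<bar>b - b'\<bar> < d
       \<Longrightarrow> \<bar>f (a, b) - f (a', b')\<bar> < e"
proof -
  obtain d where d: "d > 0" "\<forall>x\<in>S. \<forall>x'\<in>S. dist x' x < d \<longrightarrow> dist (f x') (f x) < e"
    using compact_uniformly_continuous[OF assms(2,1)] assms(3)
    unfolding uniformly_continuous_on_def by metis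
  show thesis
  proof (rule that[of "d / 2"])
    fix a b a' b' assume h: "(a, b) \<in> S" "(a', b') \<in> S" "\<bar>a - a'\<bar> < d / 2" "\<bar>b - b'\<bar> < d / 2"
    have "dist (a, b) (a', b') \<le> dist a a' + dist b b'" by (metis diff_Pair dist_norm norm_Pair_le)
    then have "dist (a, b) (a', b') < d" using h by (simp add: dist_real_def)
    then show "\<bar>f (a, b) - f (a', b')\<bar> < e" using d(2) h(1,2) by (auto simp: dist_real_def)
  qed (use d in simp)
qed

lemma compact_uniformly_continuous_tripleE:
  fixes f :: "real \<times> real \<times> real \<Rightarrow> real"
  assumes "compact S" "continuous_on S f" "e > 0"
  obtains d where "d > 0"
    "\<And>a b c a' b' c'. (a, b, c) \<in> S \<Longrightarrow> (a', b', c') \<in> S \<Longrightarrow> \<bar>a - a'\<bar> < d \<Longrightarrow> \<bar>b - b'\<bar> < d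
       \<Longrightarrow> \<bar>c - c'\<bar> < d \<Longrightarrow> \<bar>f (a, b, c) - f (a', b', c')\<bar> < e"
proof -
  obtain d where d: "d > 0" "\<forall>x\<in>S. \<forall>x'\<in>S. dist x' x < d \<longrightarrow> dist (f x') (f x) < e"
    using compact_uniformly_continuous[OF assms(2,1)] assms(3)
    unfolding uniformly_continuous_on_def by metis
  show thesis
  proof (rule that[of "d / 3"])
    fix a b c a' b' c'
    assume h: "(a, b, c) \<in> S" "(a', b', c') \<in> S" "\<bar>a - a'\<bar> < d / 3" "\<bar>b - b'\<bar> < d / 3" "\<bar>c - c'\<bar> < d / 3"
    have "dist (a, b, c) (a', b', c') \<le> dist a a' + dist (b, c) (b', c')"
      by (metis diff_Pair dist_norm norm_Pair_le)
    also have "dist (b, c) (b', c') \<le> dist b b' + dist c c'" by (metis diff_Pair dist_norm norm_Pair_le)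
    finally have "dist (a, b, c) (a', b', c') < d" using h by (simp add: dist_real_def)
    then show "\<bar>f (a, b, c) - f (a', b', c')\<bar> < e" using d(2) h(1,2) by (auto simp: dist_real_def)
  qed (use d in simp)
qed

lemma uniformly_continuous_on_pairI:
  fixes f :: "real \<times> real \<Rightarrow> real"
  assumes "\<And>e. e > 0 \<Longrightarrow> \<exists>d>0. \<forall>a b a' b'. (a, b) \<in> S \<longrightarrow> (a', b') \<in> S \<longrightarrow>
             \<bar>a - a'\<bar> < d \<longrightarrow> \<bar>b - b'\<bar> < d \<longrightarrow> \<bar>f (a, b) - f (a', b')\<bar> < e"
  shows "uniformly_continuous_on S f"
  unfolding uniformly_continuous_on_def
proof (intro allI impI)
  fix e :: real assume "e > 0"
  then obtain d where d: "d > 0" "\<forall>a b a' b'. (a, b) \<in> S \<longrightarrow> (a', b') \<in> S \<longrightarrow>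
             \<bar>a - a'\<bar> < d \<longrightarrow> \<bar>b - b'\<bar> < d \<longrightarrow> \<bar>f (a, b) - f (a', b')\<bar> < e"
    using assms by blast
  show "\<exists>d>0. \<forall>x\<in>S. \<forall>x'\<in>S. dist x' x < d \<longrightarrow> dist (f x') (f x) < e"
  proof (intro exI[of _ d] conjI ballI impI d(1))
    fix p q assume pq: "p \<in> S" "q \<in> S" "dist q p < d"
    obtain a b a' b' where "p = (a, b)" "q = (a', b')" by force
    moreover from this have "\<bar>a' - a\<bar> < d" "\<bar>b' - b\<bar> < d"
      using dist_fst_le[of q p] dist_snd_le[of q p] pq(3) by (auto simp: dist_real_def)
    ultimately show "dist (f q) (f p) < e" using d(2) pq(1,2) unfolding dist_real_def by blast
  qed
qed

lemma continuous_on_slice: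
  assumes "continuous_on (A \<times> B) (\<lambda>(s, x). d s x)" "s \<in> A"
  shows "continuous_on B (d s)"
proof -
  have "continuous_on B (Pair s)" by (intro continuous_intros)
  then show ?thesis using continuous_on_compose2[OF assms(1), of B "Pair s"] assms(2) by auto
qed

lemma continuous_on_compose_graph:
  assumes "continuous_on (A \<times> B) (\<lambda>(t, z). F t z)" "continuous_on S X" "S \<subseteq> A"
    "\<And>s. s \<in> S \<Longrightarrow> X s \<in> B"
  shows "continuous_on S (\<lambda>s. F s (X s))"
proof -
  have "continuous_on S (\<lambda>s. (s, X s))" using assms(2) by (intro continuous_intros)
  then show ?thesis using continuous_on_compose2[OF assms(1), of S "\<lambda>s. (s, X s)"] assms(3,4)
    by auto
qed

lemma continuous_on_integral_upper_limit:
  fixes F :: "'a::metric_space \<Rightarrow> real \<Rightarrow> real"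
  assumes P: "compact P" and Fc: "continuous_on (P \<times> {a..b}) (\<lambda>(p, x). F p x)" and ab: "a \<le> b"
  shows "continuous_on (P \<times> {a..b}) (\<lambda>(p, x). integral {a..x} (F p))"
  unfolding continuous_on_iff
proof (intro ballI allI impI)
  have cpt: "compact (P \<times> {a..b})" using P by (simp add: compact_Times)
  obtain M where M: "\<And>z. z \<in> P \<times> {a..b} \<Longrightarrow> \<bar>(\<lambda>(p, x). F p x) z\<bar> \<le> M"
    using compact_imp_bounded[OF compact_continuous_image[OF Fc cpt]] unfolding bounded_iff by force
  have Fp: "F p integrable_on {a..b}" if "p \<in> P" for p
    by (rule integrable_continuous_interval[OF continuous_on_slice[OF Fc that]])
  fix z e assume z: "z \<in> P \<times> {a..b}" and e: "(0::real) < e"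
  obtain p x where zpx: "z = (p, x)" and p: "p \<in> P" and x: "x \<in> {a..b}" using z by force
  define e1 where "e1 = e / (2 * (b - a + 1))"
  have e1: "e1 > 0" using e ab by (simp add: e1_def)
  obtain d1 where d1: "d1 > 0" "\<forall>z1\<in>P \<times> {a..b}. \<forall>z2\<in>P \<times> {a..b}. dist z2 z1 < d1 \<longrightarrow>
       dist ((\<lambda>(p, x). F p x) z2) ((\<lambda>(p, x). F p x) z1) < e1"
    using compact_uniformly_continuous[OF Fc cpt] e1 unfolding uniformly_continuous_on_def by metis
  have M0: "0 \<le> M" using M[of "(p, x)"] p x by auto
  define d where "d = min d1 (e / (2 * (M + 1)))"
  have d: "d > 0" using d1 e M0 by (simp add: d_def)
  show "\<exists>d>0. \<forall>z'\<in>P \<times> {a..b}. dist z' z < d \<longrightarrow>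
        dist ((\<lambda>(p, x). integral {a..x} (F p)) z') ((\<lambda>(p, x). integral {a..x} (F p)) z) < e"
  proof (intro exI[of _ d] conjI ballI impI d)
    fix z' assume z': "z' \<in> P \<times> {a..b}" and dz: "dist z' z < d"
    obtain p' x' where zpx': "z' = (p', x')" and p': "p' \<in> P" and x': "x' \<in> {a..b}" using z' by force
    have dp: "dist p' p < d1" and dx: "\<bar>x' - x\<bar> < d"
      using dz dist_fst_le[of z' z] dist_snd_le[of z' z] unfolding zpx zpx' d_def
      by (auto simp: dist_real_def)
    have "\<bar>integral {a..x} (F p') - integral {a..x} (F p)\<bar> \<le> e1 * (x - a)"
    proof (rule abs_integral_diff_le)
      fix \<xi> assume "\<xi> \<in> {a..x}"
      moreover have "dist (p', \<xi>) (p, \<xi>) < d1" using dp by (simp add: dist_Pair_Pair)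
      ultimately show "\<bar>F p' \<xi> - F p \<xi>\<bar> \<le> e1" using d1(2) p p' x by (force simp: dist_real_def)
    qed (use x integrable_subinterval_real[OF Fp[OF p]] integrable_subinterval_real[OF Fp[OF p']] in auto)
    also have "\<dots> \<le> e1 * (b - a)" using e1 x by (simp add: mult_left_mono)
    also have "\<dots> < e / 2" unfolding e1_def using e ab by (simp add: field_simps)
    finally have A: "\<bar>integral {a..x} (F p') - integral {a..x} (F p)\<bar> < e / 2" .
    have "\<bar>integral {a..x'} (F p') - integral {a..x} (F p')\<bar> \<le> M * \<bar>x' - x\<bar>"
      by (rule integral_upper_limit_lipschitz[OF Fp[OF p'] _ x x']) (use M p' in force)
    also have "\<dots> \<le> M * (e / (2 * (M + 1)))"
      using dx M0 unfolding d_def by (intro mult_left_mono) auto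
    also have "\<dots> < e / 2" using M0 e by (simp add: field_simps)
    finally have B: "\<bar>integral {a..x'} (F p') - integral {a..x} (F p')\<bar> < e / 2" .
    show "dist ((\<lambda>(p, x). integral {a..x} (F p)) z') ((\<lambda>(p, x). integral {a..x} (F p)) z) < e"
      unfolding zpx zpx' dist_real_def prod.case using A B by linarith
  qed
qed

lemma gronwall_inequality:
  fixes \<phi> :: "real \<Rightarrow> real"
  assumes ts: "t \<le> s" and c: "continuous_on {t..s} \<phi>" and a: "0 \<le> a" and K: "0 \<le> K"
    and le: "\<And>\<sigma>. \<sigma> \<in> {t..s} \<Longrightarrow> \<phi> \<sigma> \<le> a + K * integral {t..\<sigma>} \<phi>"
  shows "\<phi> s \<le> a * exp (K * (s - t))"
proof -
  define I where "I \<sigma> = integral {t..\<sigma>} \<phi>" for \<sigma>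
  define \<psi> where "\<psi> \<sigma> = exp (- K * (\<sigma> - t)) * (a + K * I \<sigma>)" for \<sigma>
  define D where "D \<sigma> = exp (- K * (\<sigma> - t)) * (K * \<phi> \<sigma>) + (- K) * exp (- K * (\<sigma> - t)) * (a + K * I \<sigma>)"
    for \<sigma>
  have dI: "(I has_real_derivative \<phi> \<sigma>) (at \<sigma> within {t..s})" if "\<sigma> \<in> {t..s}" for \<sigma>
    unfolding I_def by (rule integral_has_real_derivative[OF c that])
  have d\<psi>: "(\<psi> has_real_derivative D \<sigma>) (at \<sigma> within {t..s})" if "\<sigma> \<in> {t..s}" for \<sigma>
    unfolding \<psi>_def D_def by (rule derivative_eq_intros dI[OF that] refl | simp)+
  have D_nonpos: "D \<sigma> \<le> 0" if "\<sigma> \<in> {t..s}" for \<sigma>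
  proof -
    have "K * \<phi> \<sigma> \<le> K * (a + K * I \<sigma>)" using le[OF that] K unfolding I_def by (simp add: mult_left_mono)
    then have "exp (- K * (\<sigma> - t)) * (K * \<phi> \<sigma>) \<le> exp (- K * (\<sigma> - t)) * (K * (a + K * I \<sigma>))"
      by (simp add: mult_left_mono)
    then show ?thesis unfolding D_def by (simp add: algebra_simps)
  qed
  have "\<psi> s \<le> \<psi> t"
  proof (cases "t < s")
    case True
    obtain x where "x \<in> {t<..<s}" "\<psi> s - \<psi> t = (s - t) * D x"
      using mvt_simple[OF True, of \<psi> "\<lambda>x. (*) (D x)"] d\<psi> by (auto simp: has_field_derivative_def)
    moreover have "(s - t) * D x \<le> 0" using True D_nonpos[of x] \<open>x \<in> {t<..<s}\<close>
      by (simp add: mult_nonneg_nonpos)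
    ultimately show ?thesis by simp
  qed (use ts in auto)
  then have "exp (- K * (s - t)) * (a + K * I s) \<le> a" unfolding \<psi>_def I_def by simp
  then have "exp (K * (s - t)) * (exp (- K * (s - t)) * (a + K * I s)) \<le> exp (K * (s - t)) * a"
    by (rule mult_left_mono) simp
  moreover have "exp (K * (s - t)) * exp (- K * (s - t)) = 1" by (simp flip: exp_add)
  then have "exp (K * (s - t)) * (exp (- K * (s - t)) * (a + K * I s)) = a + K * I s"
    by (metis mult.assoc mult_1)
  ultimately have "a + K * I s \<le> a * exp (K * (s - t))" by (metis mult.commute)
  then show ?thesis using le[of s] ts unfolding I_def by auto
qed

lemma has_real_derivative_by_remainder:
  fixes f :: "real \<Rightarrow> real"
  assumes "\<And>\<eta>. \<eta> > 0 \<Longrightarrow> \<exists>\<delta>>0. \<forall>y'\<in>S. \<bar>y' - y\<bar> < \<delta> \<longrightarrow> \<bar>f y' - f y - D * (y' - y)\<bar> \<le> \<eta> * \<bar>y' - y\<bar>"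
  shows "(f has_real_derivative D) (at y within S)"
  unfolding has_field_derivative_iff tendsto_iff
proof (intro allI impI)
  fix e :: real assume e: "e > 0"
  obtain \<delta> where \<delta>: "\<delta> > 0" "\<forall>y'\<in>S. \<bar>y' - y\<bar> < \<delta> \<longrightarrow> \<bar>f y' - f y - D * (y' - y)\<bar> \<le> (e / 2) * \<bar>y' - y\<bar>"
    using assms[of "e / 2"] e by auto
  show "\<forall>\<^sub>F x in at y within S. dist ((f x - f y) / (x - y)) D < e"
    unfolding eventually_at
  proof (intro exI[of _ \<delta>] conjI ballI impI \<delta>(1))
    fix x assume x: "x \<in> S" and h: "x \<noteq> y \<and> dist x y < \<delta>"
    then have nz: "\<bar>x - y\<bar> > 0" by simp
    have "\<bar>f x - f y - D * (x - y)\<bar> \<le> (e / 2) * \<bar>x - y\<bar>" using \<delta>(2) x h by (auto simp: dist_real_def)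
    moreover have "(f x - f y) / (x - y) - D = (f x - f y - D * (x - y)) / (x - y)"
      using nz by (simp add: field_simps)
    ultimately have "\<bar>(f x - f y) / (x - y) - D\<bar> \<le> e / 2" using nz by (simp add: abs_divide divide_le_eq)
    then show "dist ((f x - f y) / (x - y)) D < e" using e by (simp add: dist_real_def)
  qed
qed

lemma derivative_remainder_le:
  fixes f f' :: "real \<Rightarrow> real"
  assumes S: "convex S" and df: "\<And>x. x \<in> S \<Longrightarrow> (f has_real_derivative f' x) (at x within S)"
    and xy: "x \<in> S" "y \<in> S"
    and close: "\<And>\<xi>. \<xi> \<in> S \<Longrightarrow> \<bar>\<xi> - x\<bar> \<le> \<bar>y - x\<bar> \<Longrightarrow> \<bar>f' \<xi> - f' x\<bar> \<le> \<eta>"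
  shows "\<bar>f y - f x - f' x * (y - x)\<bar> \<le> \<eta> * \<bar>y - x\<bar>"
proof -
  define S' where "S' = closed_segment x y"
  have sub: "S' \<subseteq> S" unfolding S'_def using S xy by (simp add: closed_segment_subset)
  have mem: "\<bar>\<xi> - x\<bar> \<le> \<bar>y - x\<bar>" if "\<xi> \<in> S'" for \<xi>
    using that unfolding S'_def closed_segment_eq_real_ivl by (auto split: if_splits)
  have "norm ((\<lambda>\<xi>. f \<xi> - f' x * \<xi>) y - (\<lambda>\<xi>. f \<xi> - f' x * \<xi>) x) \<le> \<eta> * norm (y - x)"
  proof (rule field_differentiable_bound[where f' = "\<lambda>\<xi>. f' \<xi> - f' x" and S = S'])
    show "convex S'" unfolding S'_def by simp
    fix z assume z: "z \<in> S'"
    show "((\<lambda>\<xi>. f \<xi> - f' x * \<xi>) has_field_derivative f' z - f' x) (at z within S')"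
      by (rule derivative_eq_intros has_field_derivative_subset[OF df sub] | use z sub in auto)+
    show "norm (f' z - f' x) \<le> \<eta>" using close[of z] z sub mem[OF z] by auto
  qed (auto simp: S'_def)
  then show ?thesis by (simp add: algebra_simps)
qed

lemma constant_on_interval_if_locally_flat:
  fixes F :: "real \<Rightarrow> real"
  assumes flat: "\<And>\<eta>. \<eta> > 0 \<Longrightarrow> \<exists>\<delta>>0. \<forall>t \<tau>. t \<in> {a..b} \<longrightarrow> \<tau> \<in> {t..b} \<longrightarrow> \<tau> - t < \<delta> \<longrightarrow>
               \<bar>F t - F \<tau>\<bar> \<le> \<eta> * (\<tau> - t)"
    and xy: "x \<in> {a..b}" "y \<in> {a..b}"
  shows "F x = F y"
proof -
  have "(F has_real_derivative 0) (at t within {a..b})" if t: "t \<in> {a..b}" for t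
  proof (rule has_real_derivative_by_remainder)
    fix \<eta> :: real assume "\<eta> > 0"
    then obtain \<delta> where \<delta>: "\<delta> > 0" "\<forall>t \<tau>. t \<in> {a..b} \<longrightarrow> \<tau> \<in> {t..b} \<longrightarrow> \<tau> - t < \<delta> \<longrightarrow>
        \<bar>F t - F \<tau>\<bar> \<le> \<eta> * (\<tau> - t)"
      using flat by blast
    show "\<exists>\<delta>>0. \<forall>t'\<in>{a..b}. \<bar>t' - t\<bar> < \<delta> \<longrightarrow> \<bar>F t' - F t - 0 * (t' - t)\<bar> \<le> \<eta> * \<bar>t' - t\<bar>"
    proof (intro exI[of _ \<delta>] conjI ballI impI \<delta>(1))
      fix t' assume t': "t' \<in> {a..b}" and tt: "\<bar>t' - t\<bar> < \<delta>"
      show "\<bar>F t' - F t - 0 * (t' - t)\<bar> \<le> \<eta> * \<bar>t' - t\<bar>"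
      proof (cases "t \<le> t'")
        case True
        then show ?thesis using \<delta>(2) t t' tt by (auto simp: abs_minus_commute)
      next
        case False
        then show ?thesis using \<delta>(2) t t' tt by auto
      qed
    qed
  qed
  then obtain c where "\<forall>x\<in>{a..b}. F x = c"
    using has_field_derivative_zero_constant[of "{a..b}" F] by auto
  then show ?thesis using xy by simp
qed

lemma abs_mult_diff_le:
  fixes a a' J J' :: real
  assumes "0 \<le> J" "J \<le> Jm" "\<bar>a - a'\<bar> \<le> ea" "\<bar>a'\<bar> \<le> A" "\<bar>J - J'\<bar> \<le> eJ"
  shows "\<bar>a * J - a' * J'\<bar> \<le> ea * Jm + A * eJ"
proof -
  have "a * J - a' * J' = (a - a') * J + a' * (J - J')" by (simp add: algebra_simps)
  then have "\<bar>a * J - a' * J'\<bar> \<le> \<bar>a - a'\<bar> * J + \<bar>a'\<bar> * \<bar>J - J'\<bar>"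
    using assms(1) by (simp add: abs_mult abs_triangle_ineq[THEN order_trans])
  also have "\<dots> \<le> ea * Jm + A * eJ"
    using assms by (intro add_mono) (meson abs_ge_zero mult_mono order_trans)+
  finally show ?thesis .
qed

lemma abs_chain_remainder_le:
  fixes F F' :: "real \<Rightarrow> real"
  shows "\<bar>F z' - F z - F' z * J * dy\<bar> \<le> \<bar>F z' - F z - F' z * (z' - z)\<bar> + \<bar>F' z\<bar> * \<bar>z' - z - J * dy\<bar>"
proof -
  have "F z' - F z - F' z * J * dy = (F z' - F z - F' z * (z' - z)) + F' z * (z' - z - J * dy)"
    by (simp add: algebra_simps)
  then show ?thesis by (metis abs_mult abs_triangle_ineq)
qed

lemma supE_least: "E \<noteq> {} \<Longrightarrow> (\<And>z. z \<in> E \<Longrightarrow> \<bar>v z\<bar> \<le> R) \<Longrightarrow> supE E v \<le> R"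
  unfolding supE_def by (rule cSUP_least) auto

lemma abs_le_supE:
  assumes "compact E" "continuous_on E v" "z \<in> E"
  shows "\<bar>v z\<bar> \<le> supE E v"
proof -
  have "compact ((\<lambda>z. \<bar>v z\<bar>) ` E)" by (rule compact_continuous_image) (intro continuous_intros assms)+
  then have "bdd_above ((\<lambda>z. \<bar>v z\<bar>) ` E)" by (meson bounded_imp_bdd_above compact_imp_bounded)
  then show ?thesis unfolding supE_def using assms(3) by (rule cSUP_upper2) simp
qed

lemma supE_const: "E \<noteq> {} \<Longrightarrow> supE E (\<lambda>z. c) = \<bar>c\<bar>"
  unfolding supE_def by simp

lemma continuous_on_imp_integrable_on_subinterval:
  fixes f :: "real \<Rightarrow> 'a::banach"
  assumes "continuous_on {a..b} f" "a \<le> c" "d \<le> b"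
  shows "f integrable_on {c..d}"
  by (rule integrable_continuous_interval[OF continuous_on_subset[OF assms(1)]]) (use assms in auto)

lemma continuous_on_integral_varying_bounds:
  fixes F :: "'a::metric_space \<Rightarrow> real \<Rightarrow> real"
  assumes P: "compact P" and F: "continuous_on (P \<times> {a..b}) (\<lambda>(p, x). F p x)"
    and c: "continuous_on P \<sigma>" "continuous_on P \<tau>"
    and le: "\<And>p. p \<in> P \<Longrightarrow> a \<le> \<sigma> p \<and> \<sigma> p \<le> \<tau> p \<and> \<tau> p \<le> b"
  shows "continuous_on P (\<lambda>p. integral {\<sigma> p..\<tau> p} (F p))"
proof -
  have ab: "a \<le> b" if "P \<noteq> {}" using le that by force
  have I: "continuous_on (P \<times> {a..b}) (\<lambda>(p, x). integral {a..x} (F p))"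
    by (cases "P = {}") (auto intro: continuous_on_integral_upper_limit[OF P F ab])
  have I\<tau>: "continuous_on P (\<lambda>p. (\<lambda>(p, x). integral {a..x} (F p)) (p, \<tau> p))"
    by (rule continuous_on_compose2[OF I]) (use c le in \<open>fastforce intro!: continuous_intros\<close>)+
  have I\<sigma>: "continuous_on P (\<lambda>p. (\<lambda>(p, x). integral {a..x} (F p)) (p, \<sigma> p))"
    by (rule continuous_on_compose2[OF I]) (use c le in \<open>fastforce intro!: continuous_intros\<close>)+
  have "integral {\<sigma> p..\<tau> p} (F p) = integral {a..\<tau> p} (F p) - integral {a..\<sigma> p} (F p)"
    if "p \<in> P" for p
    using Henstock_Kurzweil_Integration.integral_combine[of a "\<sigma> p" "\<tau> p" "F p"] le[OF that]
      integrable_subinterval_real[OF integrable_continuous_interval[OF continuous_on_slice[OF F that]]]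
    by fastforce
  then show ?thesis
    using continuous_on_diff[OF I\<tau> I\<sigma>] by (auto elim!: continuous_on_eq)
qed

lemma has_integral_exp_affine:
  fixes c :: real
  assumes "c \<noteq> 0" "t \<le> T"
  shows "((\<lambda>s. exp (c * (T - s))) has_integral (exp (c * (T - t)) - 1) / c) {t..T}"
proof -
  have "((\<lambda>s. - exp (c * (T - s)) / c) has_real_derivative exp (c * (T - s))) (at s within {t..T})"
    for s using assms(1) by (auto intro!: derivative_eq_intros)
  then have "((\<lambda>s. exp (c * (T - s))) has_integral (- exp (c * (T - T)) / c - - exp (c * (T - t)) / c)) {t..T}"
    using assms(2) by (intro fundamental_theorem_of_calculus)
      (auto simp: has_real_derivative_iff_has_vector_derivative[symmetric])
  then show ?thesis by (simp add: diff_divide_distrib)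
qed

lemma has_real_derivative_of_uniform_remainder_limit:
  fixes w :: "nat \<Rightarrow> real \<Rightarrow> real" and d :: "nat \<Rightarrow> real"
  assumes w: "\<And>x. x \<in> S \<Longrightarrow> (\<lambda>n. w n x) \<longlonglongrightarrow> f x" and d: "d \<longlonglongrightarrow> D" and y: "y \<in> S"
    and rem: "\<And>\<eta>. \<eta> > 0 \<Longrightarrow> \<exists>\<delta>>0. \<forall>n. \<forall>y'\<in>S. \<bar>y' - y\<bar> < \<delta> \<longrightarrow>
                \<bar>w n y' - w n y - d n * (y' - y)\<bar> \<le> \<eta> * \<bar>y' - y\<bar>"
  shows "(f has_real_derivative D) (at y within S)"
proof (rule has_real_derivative_by_remainder)
  fix \<eta> :: real assume "\<eta> > 0"
  then obtain \<delta> where \<delta>: "\<delta> > 0" "\<forall>n. \<forall>y'\<in>S. \<bar>y' - y\<bar> < \<delta> \<longrightarrow>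
      \<bar>w n y' - w n y - d n * (y' - y)\<bar> \<le> \<eta> * \<bar>y' - y\<bar>"
    using rem by blast
  show "\<exists>\<delta>>0. \<forall>y'\<in>S. \<bar>y' - y\<bar> < \<delta> \<longrightarrow> \<bar>f y' - f y - D * (y' - y)\<bar> \<le> \<eta> * \<bar>y' - y\<bar>"
  proof (intro exI[of _ \<delta>] conjI ballI impI \<delta>(1))
    fix y' assume y': "y' \<in> S" and yy: "\<bar>y' - y\<bar> < \<delta>"
    have "(\<lambda>n. \<bar>w n y' - w n y - d n * (y' - y)\<bar>) \<longlonglongrightarrow> \<bar>f y' - f y - D * (y' - y)\<bar>"
      by (intro tendsto_intros w y y' d)
    then show "\<bar>f y' - f y - D * (y' - y)\<bar> \<le> \<eta> * \<bar>y' - y\<bar>"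
      by (rule LIMSEQ_le_const2) (use \<delta>(2) y' yy in blast)
  qed
qed

text \<open>Compare difference quotients over a fixed step \<open>\<epsilon>\<close>: the remainder bound makes them close
  to the derivatives, uniform convergence makes them close to each other.\<close>
lemma uniformly_Cauchy_on_derivatives:
  fixes w d :: "nat \<Rightarrow> 'a \<Rightarrow> real \<Rightarrow> real"
  assumes lr: "l < r"
    and rem: "\<And>\<eta>. \<eta> > 0 \<Longrightarrow> \<exists>\<delta>>0. \<forall>n p y y'. p \<in> P \<longrightarrow> y \<in> {l..r} \<longrightarrow> y' \<in> {l..r} \<longrightarrow>
                \<bar>y' - y\<bar> < \<delta> \<longrightarrow> \<bar>w n p y' - w n p y - d n p y * (y' - y)\<bar> \<le> \<eta> * \<bar>y' - y\<bar>"
    and conv: "\<And>\<epsilon>. \<epsilon> > 0 \<Longrightarrow> \<exists>N. \<forall>n\<ge>N. \<forall>p\<in>P. \<forall>y\<in>{l..r}. \<bar>f p y - w n p y\<bar> \<le> \<epsilon>"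
  shows "uniformly_Cauchy_on (P \<times> {l..r}) (\<lambda>n q. d n (fst q) (snd q))"
proof (rule uniformly_Cauchy_onI)
  fix e :: real assume e: "e > 0"
  obtain \<delta> where \<delta>: "\<delta> > 0" "\<forall>n p y y'. p \<in> P \<longrightarrow> y \<in> {l..r} \<longrightarrow> y' \<in> {l..r} \<longrightarrow>
      \<bar>y' - y\<bar> < \<delta> \<longrightarrow> \<bar>w n p y' - w n p y - d n p y * (y' - y)\<bar> \<le> (e / 4) * \<bar>y' - y\<bar>"
    using rem[of "e / 4"] e by auto
  define \<epsilon> where "\<epsilon> = min (\<delta> / 2) ((r - l) / 2)"
  have \<epsilon>: "\<epsilon> > 0" "\<epsilon> < \<delta>" "\<epsilon> \<le> (r - l) / 2" unfolding \<epsilon>_def using \<delta>(1) lr by (auto simp: min_def)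
  obtain N where N: "\<forall>n\<ge>N. \<forall>p\<in>P. \<forall>y\<in>{l..r}. \<bar>f p y - w n p y\<bar> \<le> e * \<epsilon> / 16"
    using conv[of "e * \<epsilon> / 16"] e \<epsilon>(1) by auto
  show "\<exists>M. \<forall>q\<in>P \<times> {l..r}. \<forall>m\<ge>M. \<forall>n\<ge>M. dist (d m (fst q) (snd q)) (d n (fst q) (snd q)) < e"
  proof (intro exI[of _ N] ballI allI impI)
    fix q m n assume q: "q \<in> P \<times> {l..r}" and m: "m \<ge> N" and n: "n \<ge> N"
    obtain p y where qq: "q = (p, y)" and p: "p \<in> P" and y: "y \<in> {l..r}" using q by force
    define y1 where "y1 = (if y + \<epsilon> \<le> r then y + \<epsilon> else y - \<epsilon>)"
    have y1: "y1 \<in> {l..r}" "\<bar>y1 - y\<bar> = \<epsilon>" unfolding y1_def using y \<epsilon> by auto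
    have W: "\<bar>w k p y1 - w k p y - d k p y * (y1 - y)\<bar> \<le> (e / 4) * \<epsilon>" for k
      using \<delta>(2) p y y1 \<epsilon>(2) by fastforce
    have "\<bar>(d m p y - d n p y) * (y1 - y)\<bar> \<le> (e / 4) * \<epsilon> + (e / 4) * \<epsilon> + 4 * (e * \<epsilon> / 16)"
      using W[of m] W[of n] N m n p y y1(1) unfolding left_diff_distrib
      by (smt (verit, best))
    then have "\<bar>d m p y - d n p y\<bar> * \<epsilon> < e * \<epsilon>"
      unfolding abs_mult y1(2) using e \<epsilon>(1) by (simp add: field_simps)
    then show "dist (d m (fst q) (snd q)) (d n (fst q) (snd q)) < e"
      unfolding qq dist_real_def using \<epsilon>(1) by simp
  qed
qed

section \<open>Characteristics and their derivative\<close>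

locale characteristics =
  fixes T l r B Mb :: real
    and b bz :: "real \<Rightarrow> real \<Rightarrow> real"
    and Z :: "real \<Rightarrow> real \<Rightarrow> real \<Rightarrow> real"
  assumes lr: "l < r" and T_pos: "0 < T"
    and b_cont: "continuous_on ({0..T} \<times> {l..r}) (\<lambda>(t, z). b t z)"
    and b_bound: "\<And>t z. t \<in> {0..T} \<Longrightarrow> z \<in> {l..r} \<Longrightarrow> \<bar>b t z\<bar> \<le> B"
    and b_deriv: "\<And>t z. t \<in> {0..T} \<Longrightarrow> z \<in> {l..r} \<Longrightarrow>
                    (b t has_real_derivative bz t z) (at z within {l..r})"
    and bz_cont: "continuous_on ({0..T} \<times> {l..r}) (\<lambda>(t, z). bz t z)"
    and bz_bound: "\<And>t z. t \<in> {0..T} \<Longrightarrow> z \<in> {l..r} \<Longrightarrow> \<bar>bz t z\<bar> \<le> Mb"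
    and Z_in: "\<And>t z s. t \<in> {0..T} \<Longrightarrow> z \<in> {l..r} \<Longrightarrow> s \<in> {t..T} \<Longrightarrow> Z t z s \<in> {l..r}"
    and Z_ode: "\<And>t z s. t \<in> {0..T} \<Longrightarrow> z \<in> {l..r} \<Longrightarrow> s \<in> {t..T} \<Longrightarrow>
                  ((\<lambda>\<rho>. b \<rho> (Z t z \<rho>)) has_integral (Z t z s - z)) {t..s}"
begin

abbreviation "E \<equiv> {l..r}"

lemma l_in_E: "l \<in> E" and E_ne: "E \<noteq> {}"
  using lr by auto

lemma B_nonneg: "0 \<le> B"
  using b_bound[of 0 l] T_pos lr by auto

lemma Mb_nonneg: "0 \<le> Mb"
  using bz_bound[of 0 l] T_pos lr by auto

definition "Jmax = exp (Mb * T)"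

lemma Jmax_ge_1: "1 \<le> Jmax"
  unfolding Jmax_def using Mb_nonneg T_pos by simp

lemma exp_le_Jmax: "0 \<le> x \<Longrightarrow> x \<le> T \<Longrightarrow> exp (Mb * x) \<le> Jmax"
  unfolding Jmax_def using Mb_nonneg by (simp add: mult_left_mono)

lemma Z_eq_integral:
  assumes "t \<in> {0..T}" "y \<in> E" "s \<in> {t..T}"
  shows "(\<lambda>\<rho>. b \<rho> (Z t y \<rho>)) integrable_on {t..s}"
    and "Z t y s = y + integral {t..s} (\<lambda>\<rho>. b \<rho> (Z t y \<rho>))"
  using Z_ode[OF assms] by (auto simp: has_integral_integrable integral_unique)

lemma Z_start: "t \<in> {0..T} \<Longrightarrow> y \<in> E \<Longrightarrow> Z t y t = y"
  using Z_eq_integral(2)[of t y t] by simp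

lemma Z_lipschitz_time:
  assumes t: "t \<in> {0..T}" and y: "y \<in> E" and s: "s \<in> {t..T}" "s' \<in> {t..T}"
  shows "\<bar>Z t y s - Z t y s'\<bar> \<le> B * \<bar>s - s'\<bar>"
proof -
  have "\<bar>integral {t..s'} (\<lambda>\<rho>. b \<rho> (Z t y \<rho>)) - integral {t..s} (\<lambda>\<rho>. b \<rho> (Z t y \<rho>))\<bar>
        \<le> B * \<bar>s' - s\<bar>"
  proof (rule integral_upper_limit_lipschitz[OF Z_eq_integral(1)[OF t y, of T]])
    fix \<rho> assume "\<rho> \<in> {t..T}"
    then show "\<bar>b \<rho> (Z t y \<rho>)\<bar> \<le> B" using b_bound Z_in[OF t y] t by auto
  qed (use s t in auto)
  then show ?thesis
    using Z_eq_integral(2)[OF t y s(1)] Z_eq_integral(2)[OF t y s(2)] by (simp add: abs_minus_commute)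
qed

lemma continuous_on_Z: assumes "t \<in> {0..T}" "y \<in> E" shows "continuous_on {t..T} (Z t y)"
proof (rule lipschitz_on_continuous_on)
  show "B-lipschitz_on {t..T} (Z t y)"
    by (rule lipschitz_onI) (use Z_lipschitz_time[OF assms] B_nonneg in \<open>auto simp: dist_real_def\<close>)
qed

lemma continuous_on_compose_Z:
  assumes "continuous_on ({0..T} \<times> E) (\<lambda>(t, z). F t z)" "t \<in> {0..T}" "y \<in> E"
  shows "continuous_on {t..T} (\<lambda>s. F s (Z t y s))"
  by (rule continuous_on_compose_graph[OF assms(1) continuous_on_Z[OF assms(2,3)]])
     (use assms Z_in in auto)

lemma b_lipschitz:
  assumes "s \<in> {0..T}" "x \<in> E" "x' \<in> E"
  shows "\<bar>b s x - b s x'\<bar> \<le> Mb * \<bar>x - x'\<bar>"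
  using field_differentiable_bound[of E "b s" "bz s" Mb x x'] b_deriv bz_bound assms by auto

lemma b_linear_approx:
  assumes "\<eta> > 0"
  obtains \<delta> where "\<delta> > 0"
    "\<And>s x x'. s \<in> {0..T} \<Longrightarrow> x \<in> E \<Longrightarrow> x' \<in> E \<Longrightarrow> \<bar>x' - x\<bar> < \<delta> \<Longrightarrow>
       \<bar>b s x' - b s x - bz s x * (x' - x)\<bar> \<le> \<eta> * \<bar>x' - x\<bar>"
proof -
  obtain \<delta> where \<delta>: "\<delta> > 0" "\<And>a b a' b'. (a, b) \<in> {0..T} \<times> E \<Longrightarrow> (a', b') \<in> {0..T} \<times> E \<Longrightarrow>
      \<bar>a - a'\<bar> < \<delta> \<Longrightarrow> \<bar>b - b'\<bar> < \<delta> \<Longrightarrow> \<bar>(\<lambda>(t, z). bz t z) (a, b) - (\<lambda>(t, z). bz t z) (a', b')\<bar> < \<eta>"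
    using compact_uniformly_continuous_pairE[OF _ bz_cont assms] by (auto simp: compact_Times)
  show thesis
  proof (rule that[OF \<delta>(1)])
    fix s x x' assume h: "s \<in> {0..T}" "x \<in> E" "x' \<in> E" "\<bar>x' - x\<bar> < \<delta>"
    show "\<bar>b s x' - b s x - bz s x * (x' - x)\<bar> \<le> \<eta> * \<bar>x' - x\<bar>"
    proof (rule derivative_remainder_le[of E])
      fix \<xi> assume "\<xi> \<in> E" "\<bar>\<xi> - x\<bar> \<le> \<bar>x' - x\<bar>"
      then show "\<bar>bz s \<xi> - bz s x\<bar> \<le> \<eta>" using \<delta>(2)[of s \<xi> s x] h \<delta>(1) by fastforce
    qed (use h b_deriv in auto)
  qed
qed

lemma ode_solutions_diff_le:
  fixes Z1 Z2 :: "real \<Rightarrow> real"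
  assumes ts: "0 \<le> t" "t \<le> s" "s \<le> T" and c: "continuous_on {t..s} Z1" "continuous_on {t..s} Z2"
    and inE: "\<And>\<sigma>. \<sigma> \<in> {t..s} \<Longrightarrow> Z1 \<sigma> \<in> E \<and> Z2 \<sigma> \<in> E"
    and eq1: "\<And>\<sigma>. \<sigma> \<in> {t..s} \<Longrightarrow> Z1 \<sigma> = c1 + integral {t..\<sigma>} (\<lambda>\<rho>. b \<rho> (Z1 \<rho>))"
    and eq2: "\<And>\<sigma>. \<sigma> \<in> {t..s} \<Longrightarrow> Z2 \<sigma> = c2 + integral {t..\<sigma>} (\<lambda>\<rho>. b \<rho> (Z2 \<rho>))"
  shows "\<bar>Z1 s - Z2 s\<bar> \<le> \<bar>c1 - c2\<bar> * exp (Mb * (s - t))"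
proof -
  have bc: "continuous_on {t..s} (\<lambda>\<rho>. b \<rho> (Z1 \<rho>) - b \<rho> (Z2 \<rho>))"
    using continuous_on_compose_graph[OF b_cont c(1)] continuous_on_compose_graph[OF b_cont c(2)]
      ts inE by (intro continuous_intros) auto
  define \<phi> where "\<phi> \<sigma> = \<bar>Z1 \<sigma> - Z2 \<sigma>\<bar>" for \<sigma>
  have \<phi>c: "continuous_on {t..s} \<phi>" unfolding \<phi>_def by (intro continuous_intros c)
  show ?thesis unfolding \<phi>_def[symmetric]
  proof (rule gronwall_inequality[OF ts(2) \<phi>c _ Mb_nonneg])
    fix \<sigma> assume \<sigma>: "\<sigma> \<in> {t..s}"
    have sub: "{t..\<sigma>} \<subseteq> {t..s}" using \<sigma> by auto
    have "Z1 \<sigma> - Z2 \<sigma> = (c1 - c2) + integral {t..\<sigma>} (\<lambda>\<rho>. b \<rho> (Z1 \<rho>) - b \<rho> (Z2 \<rho>))"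
      using eq1[OF \<sigma>] eq2[OF \<sigma>] bc \<sigma> c inE ts
      by (subst integral_diff)
         (auto intro!: integrable_continuous_interval continuous_on_subset[OF _ sub]
           continuous_on_compose_graph[OF b_cont])
    moreover have "norm (integral {t..\<sigma>} (\<lambda>\<rho>. b \<rho> (Z1 \<rho>) - b \<rho> (Z2 \<rho>)))
        \<le> integral {t..\<sigma>} (\<lambda>\<rho>. Mb * \<phi> \<rho>)"
    proof (rule integral_norm_bound_integral)
      show "(\<lambda>\<rho>. b \<rho> (Z1 \<rho>) - b \<rho> (Z2 \<rho>)) integrable_on {t..\<sigma>}"
        by (rule integrable_continuous_interval[OF continuous_on_subset[OF bc sub]])
      show "(\<lambda>\<rho>. Mb * \<phi> \<rho>) integrable_on {t..\<sigma>}"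
        by (rule integrable_continuous_interval) (intro continuous_intros continuous_on_subset[OF \<phi>c sub])
      fix \<rho> assume "\<rho> \<in> {t..\<sigma>}"
      then show "norm (b \<rho> (Z1 \<rho>) - b \<rho> (Z2 \<rho>)) \<le> Mb * \<phi> \<rho>"
        unfolding \<phi>_def using b_lipschitz inE[of \<rho>] \<sigma> ts by auto
    qed
    ultimately show "\<phi> \<sigma> \<le> \<bar>c1 - c2\<bar> + Mb * integral {t..\<sigma>} \<phi>"
      unfolding \<phi>_def by (simp add: abs_triangle_ineq[THEN order_trans])
  qed simp
qed

lemma Z_lipschitz_initial:
  assumes t: "t \<in> {0..T}" and y: "y \<in> E" "y' \<in> E" and s: "s \<in> {t..T}"
  shows "\<bar>Z t y s - Z t y' s\<bar> \<le> Jmax * \<bar>y - y'\<bar>"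
proof -
  have "\<bar>Z t y s - Z t y' s\<bar> \<le> \<bar>y - y'\<bar> * exp (Mb * (s - t))"
    by (rule ode_solutions_diff_le)
       (use t s y Z_in Z_eq_integral(2) continuous_on_Z
         in \<open>auto intro: continuous_on_subset[of "{t..T}"]\<close>)
  also have "\<dots> \<le> \<bar>y - y'\<bar> * Jmax" using exp_le_Jmax[of "s - t"] t s by (intro mult_left_mono) auto
  finally show ?thesis by (simp add: mult.commute)
qed

lemma Z_flow:
  assumes t: "t \<in> {0..T}" and y: "y \<in> E" and \<tau>: "\<tau> \<in> {t..T}" and s: "s \<in> {\<tau>..T}"
  shows "Z \<tau> (Z t y \<tau>) s = Z t y s"
proof -
  define x where "x = Z t y \<tau>"
  have x: "x \<in> E" unfolding x_def using Z_in t y \<tau> by auto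
  have \<tau>': "\<tau> \<in> {0..T}" using t \<tau> by auto
  have "\<bar>Z \<tau> x s - Z t y s\<bar> \<le> \<bar>x - x\<bar> * exp (Mb * (s - \<tau>))"
  proof (rule ode_solutions_diff_le)
    show "continuous_on {\<tau>..s} (Z \<tau> x)" using continuous_on_Z[OF \<tau>' x] s
      by (auto intro: continuous_on_subset)
    show "continuous_on {\<tau>..s} (Z t y)" using continuous_on_Z[OF t y] s \<tau>
      by (auto intro: continuous_on_subset)
    fix \<sigma> assume \<sigma>: "\<sigma> \<in> {\<tau>..s}"
    show "Z \<tau> x \<sigma> \<in> E \<and> Z t y \<sigma> \<in> E" using Z_in \<sigma> \<tau>' x t y \<tau> s by auto
    show "Z \<tau> x \<sigma> = x + integral {\<tau>..\<sigma>} (\<lambda>\<rho>. b \<rho> (Z \<tau> x \<rho>))"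
      using Z_eq_integral(2)[OF \<tau>' x] \<sigma> s by auto
    have "integral {t..\<tau>} (\<lambda>\<rho>. b \<rho> (Z t y \<rho>)) + integral {\<tau>..\<sigma>} (\<lambda>\<rho>. b \<rho> (Z t y \<rho>))
        = integral {t..\<sigma>} (\<lambda>\<rho>. b \<rho> (Z t y \<rho>))"
      using \<tau> \<sigma> s Z_eq_integral(1)[OF t y, of \<sigma>]
      by (intro Henstock_Kurzweil_Integration.integral_combine) auto
    then show "Z t y \<sigma> = x + integral {\<tau>..\<sigma>} (\<lambda>\<rho>. b \<rho> (Z t y \<rho>))"
      unfolding x_def using Z_eq_integral(2)[OF t y, of \<sigma>] Z_eq_integral(2)[OF t y, of \<tau>] \<sigma> s \<tau>
      by auto
  qed (use \<tau> s T_pos t in auto)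
  then show ?thesis unfolding x_def by simp
qed

end

context characteristics
begin

text \<open>The derivative of the characteristics with respect to the initial value
  (\<open>Z_linear_approx\<close>).\<close>
definition dZ where "dZ t y s = exp (integral {t..s} (\<lambda>\<rho>. bz \<rho> (Z t y \<rho>)))"

lemma bz_Z_integrable:
  assumes "t \<in> {0..T}" "y \<in> E" "s \<in> {t..T}"
  shows "(\<lambda>\<rho>. bz \<rho> (Z t y \<rho>)) integrable_on {t..s}"
  using continuous_on_compose_Z[OF bz_cont assms(1,2)] assms(3)
  by (auto intro: continuous_on_imp_integrable_on_subinterval)

lemma dZ_bounds:
  assumes t: "t \<in> {0..T}" and y: "y \<in> E" and s: "s \<in> {t..T}"
  shows "0 < dZ t y s" "dZ t y s \<le> Jmax"
proof -
  show "0 < dZ t y s" unfolding dZ_def by simp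
  have "\<bar>integral {t..s} (\<lambda>\<rho>. bz \<rho> (Z t y \<rho>))\<bar> \<le> Mb * (s - t)"
    by (rule abs_integral_le[OF _ bz_Z_integrable[OF t y s]]) (use s t bz_bound Z_in[OF t y] in auto)
  then have "dZ t y s \<le> exp (Mb * (s - t))" unfolding dZ_def by simp
  also have "\<dots> \<le> Jmax" using exp_le_Jmax[of "s - t"] t s by auto
  finally show "dZ t y s \<le> Jmax" .
qed

lemma dZ_start: "dZ t y t = 1"
  unfolding dZ_def by simp

lemma continuous_on_dZ:
  assumes t: "t \<in> {0..T}" and y: "y \<in> E" shows "continuous_on {t..T} (dZ t y)"
  unfolding dZ_def
  by (intro continuous_intros indefinite_integral_continuous_1 bz_Z_integrable[OF t y]) (use t in auto)

lemma dZ_eq_integral: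
  assumes t: "t \<in> {0..T}" and y: "y \<in> E" and \<sigma>: "\<sigma> \<in> {t..T}"
  shows "dZ t y \<sigma> = 1 + integral {t..\<sigma>} (\<lambda>\<rho>. bz \<rho> (Z t y \<rho>) * dZ t y \<rho>)"
proof -
  define \<beta> where "\<beta> \<rho> = bz \<rho> (Z t y \<rho>)" for \<rho>
  have c: "continuous_on {t..\<sigma>} \<beta>"
    unfolding \<beta>_def by (rule continuous_on_subset[OF continuous_on_compose_Z[OF bz_cont t y]]) (use \<sigma> in auto)
  have "(dZ t y has_real_derivative (\<beta> x * dZ t y x)) (at x within {t..\<sigma>})" if "x \<in> {t..\<sigma>}" for x
    using DERIV_chain2[OF DERIV_exp integral_has_real_derivative[OF c that]]
    unfolding dZ_def \<beta>_def[symmetric] by (simp add: mult.commute)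
  then have "((\<lambda>x. \<beta> x * dZ t y x) has_integral (dZ t y \<sigma> - dZ t y t)) {t..\<sigma>}"
    using \<sigma> by (intro fundamental_theorem_of_calculus)
      (auto simp: has_real_derivative_iff_has_vector_derivative[symmetric])
  then show ?thesis unfolding \<beta>_def dZ_start by (simp add: integral_unique)
qed

lemma Z_linearization_error_eq:
  assumes t: "t \<in> {0..T}" and y: "y \<in> E" "y' \<in> E" and \<sigma>: "\<sigma> \<in> {t..T}"
  shows "Z t y' \<sigma> - Z t y \<sigma> - dZ t y \<sigma> * (y' - y) =
    integral {t..\<sigma>} (\<lambda>\<rho>. (b \<rho> (Z t y' \<rho>) - b \<rho> (Z t y \<rho>) - bz \<rho> (Z t y \<rho>) * (Z t y' \<rho> - Z t y \<rho>))
       + bz \<rho> (Z t y \<rho>) * (Z t y' \<rho> - Z t y \<rho> - dZ t y \<rho> * (y' - y)))"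
proof -
  have sub: "{t..\<sigma>} \<subseteq> {t..T}" using \<sigma> by auto
  have ci: "f integrable_on {t..\<sigma>}" if "continuous_on {t..T} f" for f :: "real \<Rightarrow> real"
    by (rule integrable_continuous_interval[OF continuous_on_subset[OF that sub]])
  have i1: "(\<lambda>\<rho>. b \<rho> (Z t y' \<rho>)) integrable_on {t..\<sigma>}" "(\<lambda>\<rho>. b \<rho> (Z t y \<rho>)) integrable_on {t..\<sigma>}"
    using Z_eq_integral(1) t y \<sigma> by auto
  have i2: "(\<lambda>\<rho>. bz \<rho> (Z t y \<rho>) * dZ t y \<rho>) integrable_on {t..\<sigma>}"
    by (rule ci) (intro continuous_intros continuous_on_compose_Z[OF bz_cont] continuous_on_dZ t y)
  have "integral {t..\<sigma>} (\<lambda>\<rho>. (b \<rho> (Z t y' \<rho>) - b \<rho> (Z t y \<rho>) - bz \<rho> (Z t y \<rho>) * (Z t y' \<rho> - Z t y \<rho>))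
       + bz \<rho> (Z t y \<rho>) * (Z t y' \<rho> - Z t y \<rho> - dZ t y \<rho> * (y' - y)))
      = integral {t..\<sigma>} (\<lambda>\<rho>. (b \<rho> (Z t y' \<rho>) - b \<rho> (Z t y \<rho>)) - (y' - y) * (bz \<rho> (Z t y \<rho>) * dZ t y \<rho>))"
    by (rule integral_cong) (simp add: algebra_simps)
  also have "\<dots> = integral {t..\<sigma>} (\<lambda>\<rho>. b \<rho> (Z t y' \<rho>)) - integral {t..\<sigma>} (\<lambda>\<rho>. b \<rho> (Z t y \<rho>))
        - (y' - y) * integral {t..\<sigma>} (\<lambda>\<rho>. bz \<rho> (Z t y \<rho>) * dZ t y \<rho>)"
    using integral_diff[OF integrable_diff[OF i1] integrable_on_mult_right[OF i2, of "y' - y"]]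
      integral_diff[OF i1] integral_mult_right[where c="y' - y"] by simp
  also have "\<dots> = Z t y' \<sigma> - Z t y \<sigma> - dZ t y \<sigma> * (y' - y)"
    using Z_eq_integral(2)[OF t _ \<sigma>] dZ_eq_integral[OF t y(1) \<sigma>] y by (simp add: algebra_simps)
  finally show ?thesis by simp
qed

lemma Z_linearization_error_le:
  assumes lin: "\<And>s x x'. s \<in> {0..T} \<Longrightarrow> x \<in> E \<Longrightarrow> x' \<in> E \<Longrightarrow> \<bar>x' - x\<bar> < \<delta>1 \<Longrightarrow>
      \<bar>b s x' - b s x - bz s x * (x' - x)\<bar> \<le> \<eta>1 * \<bar>x' - x\<bar>"
    and \<eta>1: "0 \<le> \<eta>1" and t: "t \<in> {0..T}" and y: "y \<in> E" "y' \<in> E" and \<sigma>: "\<sigma> \<in> {t..T}"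
    and yy: "Jmax * \<bar>y' - y\<bar> < \<delta>1"
  defines "\<Delta> \<rho> \<equiv> Z t y' \<rho> - Z t y \<rho> - dZ t y \<rho> * (y' - y)"
  shows "\<bar>\<Delta> \<sigma>\<bar> \<le> \<eta>1 * Jmax * \<bar>y' - y\<bar> * (\<sigma> - t) + Mb * integral {t..\<sigma>} (\<lambda>\<rho>. \<bar>\<Delta> \<rho>\<bar>)"
proof -
  have c\<Delta>: "continuous_on {t..T} \<Delta>"
    unfolding \<Delta>_def by (intro continuous_intros continuous_on_Z continuous_on_dZ t y)
  define f where "f \<rho> = (b \<rho> (Z t y' \<rho>) - b \<rho> (Z t y \<rho>) - bz \<rho> (Z t y \<rho>) * (Z t y' \<rho> - Z t y \<rho>))
      + bz \<rho> (Z t y \<rho>) * \<Delta> \<rho>" for \<rho>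
  have "\<Delta> \<sigma> = integral {t..\<sigma>} f"
    unfolding \<Delta>_def f_def by (rule Z_linearization_error_eq[OF t y \<sigma>])
  moreover have "norm (integral {t..\<sigma>} f) \<le> integral {t..\<sigma>} (\<lambda>\<rho>. \<eta>1 * Jmax * \<bar>y' - y\<bar> + Mb * \<bar>\<Delta> \<rho>\<bar>)"
  proof (rule integral_norm_bound_integral)
    have "continuous_on {t..T} f"
      unfolding f_def using t y
      by (intro continuous_intros c\<Delta> continuous_on_compose_Z[OF b_cont]
          continuous_on_compose_Z[OF bz_cont] continuous_on_Z) auto
    then show "f integrable_on {t..\<sigma>}"
      using \<sigma> by (auto intro: continuous_on_imp_integrable_on_subinterval)
    show "(\<lambda>\<rho>. \<eta>1 * Jmax * \<bar>y' - y\<bar> + Mb * \<bar>\<Delta> \<rho>\<bar>) integrable_on {t..\<sigma>}"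
      using \<sigma> continuous_on_subset[OF c\<Delta>, of "{t..\<sigma>}"]
      by (auto intro!: integrable_continuous_interval continuous_intros)
    fix \<rho> assume "\<rho> \<in> {t..\<sigma>}"
    then have \<rho>: "\<rho> \<in> {t..T}" "\<rho> \<in> {0..T}" using \<sigma> t by auto
    have zz: "\<bar>Z t y' \<rho> - Z t y \<rho>\<bar> \<le> Jmax * \<bar>y' - y\<bar>" by (rule Z_lipschitz_initial[OF t y(2,1) \<rho>(1)])
    then have "\<bar>b \<rho> (Z t y' \<rho>) - b \<rho> (Z t y \<rho>) - bz \<rho> (Z t y \<rho>) * (Z t y' \<rho> - Z t y \<rho>)\<bar>
        \<le> \<eta>1 * \<bar>Z t y' \<rho> - Z t y \<rho>\<bar>"
      using lin[OF \<rho>(2) Z_in[OF t y(1) \<rho>(1)] Z_in[OF t y(2) \<rho>(1)]] yy by simp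
    also have "\<dots> \<le> \<eta>1 * Jmax * \<bar>y' - y\<bar>"
      using mult_left_mono[OF zz \<eta>1] by (simp add: mult.assoc)
    finally have "\<bar>b \<rho> (Z t y' \<rho>) - b \<rho> (Z t y \<rho>) - bz \<rho> (Z t y \<rho>) * (Z t y' \<rho> - Z t y \<rho>)\<bar>
        \<le> \<eta>1 * Jmax * \<bar>y' - y\<bar>" .
    moreover have "\<bar>bz \<rho> (Z t y \<rho>) * \<Delta> \<rho>\<bar> \<le> Mb * \<bar>\<Delta> \<rho>\<bar>"
      unfolding abs_mult by (rule mult_right_mono) (use bz_bound \<rho>(2) Z_in[OF t y(1) \<rho>(1)] in auto)
    ultimately show "norm (f \<rho>) \<le> \<eta>1 * Jmax * \<bar>y' - y\<bar> + Mb * \<bar>\<Delta> \<rho>\<bar>"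
      unfolding f_def by (simp add: abs_triangle_ineq[THEN order_trans])
  qed
  moreover have "integral {t..\<sigma>} (\<lambda>\<rho>. \<eta>1 * Jmax * \<bar>y' - y\<bar> + Mb * \<bar>\<Delta> \<rho>\<bar>)
      = \<eta>1 * Jmax * \<bar>y' - y\<bar> * (\<sigma> - t) + Mb * integral {t..\<sigma>} (\<lambda>\<rho>. \<bar>\<Delta> \<rho>\<bar>)"
    using \<sigma> continuous_on_subset[OF c\<Delta>, of "{t..\<sigma>}"]
    by (subst integral_add) (auto intro!: integrable_continuous_interval continuous_intros)
  ultimately show ?thesis by simp
qed

lemma Z_linear_approx:
  assumes \<eta>: "\<eta> > 0"
  obtains \<delta> where "\<delta> > 0"
    "\<And>t y y' s. t \<in> {0..T} \<Longrightarrow> y \<in> E \<Longrightarrow> y' \<in> E \<Longrightarrow> s \<in> {t..T} \<Longrightarrow> \<bar>y' - y\<bar> < \<delta> \<Longrightarrow>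
       \<bar>Z t y' s - Z t y s - dZ t y s * (y' - y)\<bar> \<le> \<eta> * \<bar>y' - y\<bar>"
proof -
  have J0: "Jmax > 0" using Jmax_ge_1 by simp
  define \<eta>1 where "\<eta>1 = \<eta> / (Jmax * Jmax * (T + 1))"
  have \<eta>1: "\<eta>1 > 0" unfolding \<eta>1_def using \<eta> J0 T_pos by simp
  obtain \<delta>1 where \<delta>1: "\<delta>1 > 0" "\<And>s x x'. s \<in> {0..T} \<Longrightarrow> x \<in> E \<Longrightarrow> x' \<in> E \<Longrightarrow> \<bar>x' - x\<bar> < \<delta>1 \<Longrightarrow>
      \<bar>b s x' - b s x - bz s x * (x' - x)\<bar> \<le> \<eta>1 * \<bar>x' - x\<bar>"
    using b_linear_approx[OF \<eta>1] by blast
  show thesis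
  proof (rule that[of "\<delta>1 / Jmax"])
    show "\<delta>1 / Jmax > 0" using \<delta>1 J0 by simp
    fix t y y' s assume t: "t \<in> {0..T}" and y: "y \<in> E" "y' \<in> E" and s: "s \<in> {t..T}"
      and "\<bar>y' - y\<bar> < \<delta>1 / Jmax"
    then have yy: "Jmax * \<bar>y' - y\<bar> < \<delta>1" using J0 by (simp add: field_simps)
    define \<Delta> where "\<Delta> \<sigma> = Z t y' \<sigma> - Z t y \<sigma> - dZ t y \<sigma> * (y' - y)" for \<sigma>
    define a where "a = \<eta>1 * Jmax * \<bar>y' - y\<bar> * T"
    have a0: "0 \<le> a" unfolding a_def using \<eta>1 J0 T_pos by simp
    have "\<bar>\<Delta> s\<bar> \<le> a * exp (Mb * (s - t))"
    proof (rule gronwall_inequality[OF _ _ a0 Mb_nonneg])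
      show "t \<le> s" using s by simp
      have "continuous_on {t..T} \<Delta>"
        unfolding \<Delta>_def by (intro continuous_intros continuous_on_Z continuous_on_dZ t y)
      then show "continuous_on {t..s} (\<lambda>\<sigma>. \<bar>\<Delta> \<sigma>\<bar>)"
        using s by (auto intro!: continuous_intros intro: continuous_on_subset)
      fix \<sigma> assume "\<sigma> \<in> {t..s}"
      then have \<sigma>: "\<sigma> \<in> {t..T}" using s by auto
      have "\<eta>1 * Jmax * \<bar>y' - y\<bar> * (\<sigma> - t) \<le> a"
        unfolding a_def using \<eta>1 J0 \<sigma> t by (intro mult_left_mono) auto
      then show "\<bar>\<Delta> \<sigma>\<bar> \<le> a + Mb * integral {t..\<sigma>} (\<lambda>\<rho>. \<bar>\<Delta> \<rho>\<bar>)"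
        using Z_linearization_error_le[OF \<delta>1(2) less_imp_le[OF \<eta>1] t y \<sigma> yy] unfolding \<Delta>_def
        by linarith
    qed
    also have "\<dots> \<le> a * Jmax" using exp_le_Jmax[of "s - t"] s t a0 by (intro mult_left_mono) auto
    also have "\<dots> \<le> (\<eta>1 * (Jmax * Jmax * (T + 1))) * \<bar>y' - y\<bar>"
      unfolding a_def using \<eta>1 J0 by (simp add: algebra_simps mult_left_mono)
    also have "\<eta>1 * (Jmax * Jmax * (T + 1)) = \<eta>" unfolding \<eta>1_def using J0 T_pos by simp
    finally show "\<bar>Z t y' s - Z t y s - dZ t y s * (y' - y)\<bar> \<le> \<eta> * \<bar>y' - y\<bar>" unfolding \<Delta>_def .
  qed
qed

end

lemma abs_diff_le_dist_triple:
  fixes t y s t' y' s' :: real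
  shows "\<bar>t - t'\<bar> \<le> dist (t, y, s) (t', y', s')" "\<bar>y - y'\<bar> \<le> dist (t, y, s) (t', y', s')"
    "\<bar>s - s'\<bar> \<le> dist (t, y, s) (t', y', s')"
proof -
  have "dist (y, s) (y', s') \<le> dist (t, y, s) (t', y', s')"
    using dist_snd_le[of "(t, y, s)" "(t', y', s')"] by simp
  then show "\<bar>t - t'\<bar> \<le> dist (t, y, s) (t', y', s')" "\<bar>y - y'\<bar> \<le> dist (t, y, s) (t', y', s')"
    "\<bar>s - s'\<bar> \<le> dist (t, y, s) (t', y', s')"
    using dist_fst_le[of "(t, y, s)" "(t', y', s')"] dist_fst_le[of "(y, s)" "(y', s')"]
      dist_snd_le[of "(y, s)" "(y', s')"] by (simp_all add: dist_real_def)
qed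

context characteristics
begin

text \<open>Continued constantly to times \<open>s < t\<close>, the characteristics and their derivative
  become continuous functions on the cube \<open>{0..T} \<times> E \<times> {0..T}\<close>.\<close>
definition "Zext t y s = Z t y (max t s)"
definition "dZext t y s = dZ t y (max t s)"

lemma Zext_in: "t \<in> {0..T} \<Longrightarrow> y \<in> E \<Longrightarrow> s \<in> {0..T} \<Longrightarrow> Zext t y s \<in> E"
  unfolding Zext_def by (rule Z_in) auto

lemma Zext_eq: "s \<in> {t..T} \<Longrightarrow> Zext t y s = Z t y s"
  and dZext_eq: "s \<in> {t..T} \<Longrightarrow> dZext t y s = dZ t y s"
  unfolding Zext_def dZext_def by (simp_all add: max_def)

lemma Zext_lipschitz_start:
  assumes t: "t \<in> {0..T}" "t' \<in> {0..T}" "t \<le> t'" and y: "y \<in> E" and s: "s \<in> {0..T}"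
  shows "\<bar>Zext t y s - Zext t' y s\<bar> \<le> Jmax * B * (t' - t)"
proof -
  have JB: "B * (t' - t) \<le> Jmax * B * (t' - t)"
    using mult_right_mono[OF Jmax_ge_1, of "B * (t' - t)"] B_nonneg t by (simp add: mult.assoc)
  consider "s \<le> t" | "t < s" "s \<le> t'" | "t' < s" by linarith
  then show ?thesis
  proof cases
    case 1
    then have "max t s = t" "max t' s = t'" using t by auto
    then have "Zext t y s = y" "Zext t' y s = y" using t y Z_start unfolding Zext_def by auto
    then show ?thesis using t B_nonneg Jmax_ge_1 by simp
  next
    case 2
    have "\<bar>Z t y s - Z t y t\<bar> \<le> B * \<bar>s - t\<bar>" by (rule Z_lipschitz_time) (use t s y 2 in auto)
    also have "\<dots> \<le> B * (t' - t)" using 2 B_nonneg by (intro mult_left_mono) auto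
    finally show ?thesis using 2 t y Z_start JB by (simp add: Zext_def max_def)
  next
    case 3
    have "\<bar>Z t' (Z t y t') s - Z t' y s\<bar> \<le> Jmax * \<bar>Z t y t' - y\<bar>"
      by (rule Z_lipschitz_initial) (use t y s 3 Z_in in auto)
    also have "\<bar>Z t y t' - y\<bar> \<le> B * (t' - t)"
      using Z_lipschitz_time[of t y t' t] Z_start[of t y] t y by simp
    then have "Jmax * \<bar>Z t y t' - y\<bar> \<le> Jmax * B * (t' - t)"
      using Jmax_ge_1 by (simp add: mult.assoc mult_left_mono)
    finally show ?thesis
      using Z_flow[of t y t' s] t y s 3 by (simp add: Zext_def max_def)
  qed
qed

lemma Zext_lipschitz:
  assumes t: "t \<in> {0..T}" "t' \<in> {0..T}" and y: "y \<in> E" "y' \<in> E"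
    and s: "s \<in> {0..T}" "s' \<in> {0..T}"
  shows "\<bar>Zext t y s - Zext t' y' s'\<bar> \<le> B * \<bar>s - s'\<bar> + Jmax * \<bar>y - y'\<bar> + Jmax * B * \<bar>t - t'\<bar>"
proof -
  have "\<bar>Zext t y s - Zext t y s'\<bar> \<le> B * \<bar>max t s - max t s'\<bar>"
    unfolding Zext_def by (rule Z_lipschitz_time) (use t y s in auto)
  also have "\<dots> \<le> B * \<bar>s - s'\<bar>" using B_nonneg by (intro mult_left_mono) (auto simp: max_def)
  finally have 1: "\<bar>Zext t y s - Zext t y s'\<bar> \<le> B * \<bar>s - s'\<bar>" .
  have 2: "\<bar>Zext t y s' - Zext t y' s'\<bar> \<le> Jmax * \<bar>y - y'\<bar>"
    unfolding Zext_def by (rule Z_lipschitz_initial) (use t y s in auto)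
  have 3: "\<bar>Zext t y' s' - Zext t' y' s'\<bar> \<le> Jmax * B * \<bar>t - t'\<bar>"
    using Zext_lipschitz_start[of t t' y' s'] Zext_lipschitz_start[of t' t y' s'] t y s
    by (cases "t \<le> t'") (auto simp: abs_minus_commute)
  show ?thesis using 1 2 3 by linarith
qed

lemma continuous_on_Zext: "continuous_on ({0..T} \<times> E \<times> {0..T}) (\<lambda>(t, y, s). Zext t y s)"
proof (rule lipschitz_on_continuous_on)
  show "(B + Jmax + Jmax * B)-lipschitz_on ({0..T} \<times> E \<times> {0..T}) (\<lambda>(t, y, s). Zext t y s)"
  proof (rule lipschitz_onI)
    fix p q assume "p \<in> {0..T} \<times> E \<times> {0..T}" "q \<in> {0..T} \<times> E \<times> {0..T}"
    then obtain t y s t' y' s' where pq: "p = (t, y, s)" "q = (t', y', s')"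
      and h: "t \<in> {0..T}" "t' \<in> {0..T}" "y \<in> E" "y' \<in> E" "s \<in> {0..T}" "s' \<in> {0..T}" by auto
    have "\<bar>Zext t y s - Zext t' y' s'\<bar> \<le> B * \<bar>s - s'\<bar> + Jmax * \<bar>y - y'\<bar> + Jmax * B * \<bar>t - t'\<bar>"
      using Zext_lipschitz[OF h] .
    also have "\<dots> \<le> B * dist p q + Jmax * dist p q + Jmax * B * dist p q"
      unfolding pq using abs_diff_le_dist_triple[where t=t and y=y and s=s and t'=t' and y'=y' and s'=s'] B_nonneg Jmax_ge_1
      by (intro add_mono mult_left_mono) auto
    finally show "dist ((\<lambda>(t, y, s). Zext t y s) p) ((\<lambda>(t, y, s). Zext t y s) q)
        \<le> (B + Jmax + Jmax * B) * dist p q"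
      unfolding pq by (simp add: dist_real_def algebra_simps)
  qed (use B_nonneg Jmax_ge_1 in simp)
qed

lemma continuous_on_dZext: "continuous_on ({0..T} \<times> E \<times> {0..T}) (\<lambda>(t, y, s). dZext t y s)"
proof -
  define D where "D = {0..T} \<times> E \<times> {0..T}"
  define F where "F p \<rho> = bz \<rho> (Zext (fst p) (fst (snd p)) \<rho>)" for p :: "real \<times> real \<times> real" and \<rho>
  have cZ: "continuous_on (D \<times> {0..T}) (\<lambda>(p, \<rho>). Zext (fst p) (fst (snd p)) \<rho>)"
  proof -
    have "continuous_on (D \<times> {0..T})
        (\<lambda>x. (\<lambda>(t, y, s). Zext t y s) ((\<lambda>(p, \<rho>). (fst p, fst (snd p), \<rho>)) x))"
      by (rule continuous_on_compose2[OF continuous_on_Zext])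
         (auto intro!: continuous_intros simp: case_prod_beta D_def)
    then show ?thesis by (simp add: case_prod_beta)
  qed
  have "continuous_on (D \<times> {0..T})
      (\<lambda>x. (\<lambda>(t, z). bz t z) ((\<lambda>(p, \<rho>). (\<rho>, Zext (fst p) (fst (snd p)) \<rho>)) x))"
    by (rule continuous_on_compose2[OF bz_cont])
       (auto intro!: continuous_intros cZ[unfolded case_prod_beta D_def] Zext_in
         simp: case_prod_beta D_def)
  then have "continuous_on (D \<times> {0..T}) (\<lambda>(p, \<rho>). F p \<rho>)"
    unfolding F_def by (simp add: case_prod_beta)
  then have "continuous_on D (\<lambda>p. exp (integral {fst p..max (fst p) (snd (snd p))} (F p)))"
    by (intro continuous_intros continuous_on_integral_varying_bounds)
       (auto intro!: continuous_intros simp: D_def compact_Times)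
  moreover have "integral {t..max t s} (\<lambda>\<rho>. bz \<rho> (Z t y \<rho>)) = integral {t..max t s} (F (t, y, s))"
    for t y s by (rule integral_cong) (simp add: F_def Zext_def max_def)
  ultimately show ?thesis
    unfolding D_def by (elim continuous_on_eq) (auto simp: dZext_def dZ_def)
qed

end

context characteristics
begin

lemma continuous_on_Zext_pair:
  "continuous_on (({0..T} \<times> E) \<times> {0..T}) (\<lambda>(p, s). Zext (fst p) (snd p) s)"
proof -
  have "continuous_on (({0..T} \<times> E) \<times> {0..T})
      (\<lambda>x. (\<lambda>(t, y, s). Zext t y s) ((\<lambda>(p, s). (fst p, snd p, s)) x))"
    by (rule continuous_on_compose2[OF continuous_on_Zext]) (auto intro!: continuous_intros simp: case_prod_beta)
  then show ?thesis by (simp add: case_prod_beta)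
qed

lemma continuous_on_dZext_pair:
  "continuous_on (({0..T} \<times> E) \<times> {0..T}) (\<lambda>(p, s). dZext (fst p) (snd p) s)"
proof -
  have "continuous_on (({0..T} \<times> E) \<times> {0..T})
      (\<lambda>x. (\<lambda>(t, y, s). dZext t y s) ((\<lambda>(p, s). (fst p, snd p, s)) x))"
    by (rule continuous_on_compose2[OF continuous_on_dZext]) (auto intro!: continuous_intros simp: case_prod_beta)
  then show ?thesis by (simp add: case_prod_beta)
qed

lemma continuous_on_compose_Zext:
  assumes "continuous_on ({0..T} \<times> E) (\<lambda>(s, x). F s x)"
  shows "continuous_on (({0..T} \<times> E) \<times> {0..T}) (\<lambda>(p, s). F s (Zext (fst p) (snd p) s))"
proof -
  have "continuous_on (({0..T} \<times> E) \<times> {0..T})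
      (\<lambda>x. (\<lambda>(s, x). F s x) ((\<lambda>(p, s). (s, Zext (fst p) (snd p) s)) x))"
    by (rule continuous_on_compose2[OF assms])
       (auto intro!: continuous_intros continuous_on_Zext_pair[unfolded case_prod_beta] Zext_in
         simp: case_prod_beta)
  then show ?thesis by (simp add: case_prod_beta)
qed

end

section \<open>The derivative map and its iteration\<close>

locale transport_problem = characteristics +
  fixes L L' K H1 :: real
    and g ghat :: "real \<Rightarrow> (real \<Rightarrow> real) \<Rightarrow> (real \<Rightarrow> real)"
    and h h' :: "real \<Rightarrow> real"
    and u :: "real \<Rightarrow> real \<Rightarrow> real"
  assumes g_Cb: "\<And>t v. t \<in> {0..T} \<Longrightarrow> v \<in> Cb {l..r} \<Longrightarrow> g t v \<in> Cb {l..r}"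
    and g_lipschitz: "\<And>t v1 v2. t \<in> {0..T} \<Longrightarrow> v1 \<in> Cb {l..r} \<Longrightarrow> v2 \<in> Cb {l..r} \<Longrightarrow>
           supE {l..r} (\<lambda>z. g t v1 z - g t v2 z) \<le> L * supE {l..r} (\<lambda>z. v1 z - v2 z)"
    and ghat_Cb: "\<And>t v. t \<in> {0..T} \<Longrightarrow> v \<in> Cb {l..r} \<Longrightarrow> ghat t v \<in> Cb {l..r}"
    and g_deriv: "\<And>t v v' z. t \<in> {0..T} \<Longrightarrow> C1b_deriv {l..r} v v' \<Longrightarrow> z \<in> {l..r} \<Longrightarrow>
           (g t v has_real_derivative ghat t v' z) (at z within {l..r})"
    and ghat_bound: "\<And>s v. s \<in> {0..T} \<Longrightarrow> v \<in> Cb {l..r} \<Longrightarrow>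
           supE {l..r} (ghat s v) \<le> L' * supE {l..r} v + K"
    and ghat_unif: "\<forall>R>0. \<forall>\<epsilon>>0. \<exists>\<delta>>0.
           \<forall>t\<in>{0..T}. \<forall>t'\<in>{0..T}. \<forall>v\<in>Cb {l..r}. \<forall>v'\<in>Cb {l..r}. \<forall>z\<in>{l..r}. \<forall>z'\<in>{l..r}.
             supE {l..r} v \<le> R \<and> supE {l..r} v' \<le> R \<and>
             \<bar>t - t'\<bar> < \<delta> \<and> supE {l..r} (\<lambda>y. v y - v' y) < \<delta> \<and> \<bar>z - z'\<bar> < \<delta> \<longrightarrow>
             \<bar>ghat t v z - ghat t' v' z'\<bar> < \<epsilon>"
    and h_C1: "C1b_deriv {l..r} h h'"
    and h'_bound: "\<And>z. z \<in> {l..r} \<Longrightarrow> \<bar>h' z\<bar> \<le> H1"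
    and u_cont: "continuous_on ({0..T} \<times> {l..r}) (\<lambda>(t, z). u t z)"
    and u_repr: "\<And>t z. t \<in> {0..T} \<Longrightarrow> z \<in> {l..r} \<Longrightarrow>
           ((\<lambda>s. g s (u s) (Z t z s)) has_integral (u t z - h (Z t z T))) {t..T}"
begin

definition "Lg = max L' 0"
definition "Kg = max K 0"
definition "growth = Jmax * Lg + 1"
definition "A0 = H1 * Jmax + Jmax * Kg * T"
definition "R0 = A0 * exp (growth * T) + 1"
definition "ghat_max = Lg * R0 + Kg"

text \<open>The weight \<open>exp (growth * (T - s))\<close> absorbs the
  linear growth of \<open>ghat\<close>, so that this class is invariant under the map \<open>Phi\<close> below.\<close>
definition admissible :: "(real \<Rightarrow> real \<Rightarrow> real) \<Rightarrow> bool" where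
  "admissible d \<longleftrightarrow> continuous_on ({0..T} \<times> E) (\<lambda>(s, x). d s x) \<and>
     (\<forall>s\<in>{0..T}. \<forall>x\<in>E. \<bar>d s x\<bar> \<le> A0 * exp (growth * (T - s)))"

lemma H1_nonneg: "0 \<le> H1"
  using h'_bound[of l] lr by auto

lemma Lg_nonneg: "0 \<le> Lg" and Kg_nonneg: "0 \<le> Kg"
  unfolding Lg_def Kg_def by simp_all

lemma growth_pos: "0 < growth"
  unfolding growth_def using Lg_nonneg Jmax_ge_1 by (simp add: add_nonneg_pos)

lemma A0_nonneg: "0 \<le> A0"
  unfolding A0_def using H1_nonneg Kg_nonneg Jmax_ge_1 T_pos by simp

lemma R0_pos: "0 < R0"
  unfolding R0_def using A0_nonneg by (simp add: add_nonneg_pos)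

lemma ghat_max_nonneg: "0 \<le> ghat_max"
  unfolding ghat_max_def using Lg_nonneg Kg_nonneg R0_pos by simp

lemma admissible_weight_le: "s \<in> {0..T} \<Longrightarrow> A0 * exp (growth * (T - s)) \<le> R0 - 1"
  unfolding R0_def using growth_pos A0_nonneg by (simp add: mult_left_mono)

lemma admissible_0: "admissible (\<lambda>s x. 0)"
  unfolding admissible_def using A0_nonneg by simp

lemma admissible_Cb: "admissible d \<Longrightarrow> s \<in> {0..T} \<Longrightarrow> d s \<in> Cb E"
  unfolding Cb_def admissible_def using continuous_on_slice[of "{0..T}" E d s] by simp

lemma admissible_supE:
  "admissible d \<Longrightarrow> s \<in> {0..T} \<Longrightarrow> supE E (d s) \<le> A0 * exp (growth * (T - s))"
  by (rule supE_least[OF E_ne]) (auto simp: admissible_def)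

lemma admissible_supE_le_R0: "admissible d \<Longrightarrow> s \<in> {0..T} \<Longrightarrow> supE E (d s) \<le> R0"
  using admissible_supE admissible_weight_le by fastforce

lemma admissible_abs_le: "admissible d \<Longrightarrow> s \<in> {0..T} \<Longrightarrow> x \<in> E \<Longrightarrow> \<bar>d s x\<bar> \<le> R0"
  using admissible_weight_le[of s] unfolding admissible_def by force

lemma admissible_C1b_deriv:
  assumes "admissible d" "s \<in> {0..T}" "\<And>x. x \<in> E \<Longrightarrow> (v has_real_derivative d s x) (at x within E)"
  shows "C1b_deriv E v (d s)"
  unfolding C1b_deriv_def
proof (intro conjI ballI exI)
  show "continuous_on E v" using assms(3) by (rule DERIV_continuous_on)
  show "continuous_on E (d s)" using admissible_Cb[OF assms(1,2)] by (simp add: Cb_def)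
qed (use assms admissible_abs_le in auto)

lemma ghat_admissible_bound:
  assumes d: "admissible d" and s: "s \<in> {0..T}" and x: "x \<in> E"
  shows "\<bar>ghat s (d s) x\<bar> \<le> Lg * (A0 * exp (growth * (T - s))) + Kg"
    and "\<bar>ghat s (d s) x\<bar> \<le> ghat_max"
proof -
  have dC: "d s \<in> Cb E" by (rule admissible_Cb[OF d s])
  have "0 \<le> supE E (d s)" using abs_le_supE[of E "d s" l] dC l_in_E by (force simp: Cb_def)
  have "\<bar>ghat s (d s) x\<bar> \<le> supE E (ghat s (d s))"
    by (rule abs_le_supE) (use ghat_Cb[OF s dC] x in \<open>auto simp: Cb_def\<close>)
  also have "\<dots> \<le> L' * supE E (d s) + K" using ghat_bound s dC by blast
  also have "\<dots> \<le> Lg * supE E (d s) + Kg"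
    using \<open>0 \<le> supE E (d s)\<close> unfolding Lg_def Kg_def
    by (intro add_mono mult_right_mono) auto
  also have "\<dots> \<le> Lg * (A0 * exp (growth * (T - s))) + Kg"
    using admissible_supE[OF d s] Lg_nonneg by (simp add: mult_left_mono)
  finally show 1: "\<bar>ghat s (d s) x\<bar> \<le> Lg * (A0 * exp (growth * (T - s))) + Kg" .
  have "Lg * (A0 * exp (growth * (T - s))) \<le> Lg * R0"
    using admissible_weight_le[OF s] Lg_nonneg by (intro mult_left_mono) auto
  then show "\<bar>ghat s (d s) x\<bar> \<le> ghat_max" using 1 unfolding ghat_max_def by linarith
qed

lemma ghat_unif_R0:
  assumes "\<eta> > 0"
  obtains \<delta> where "\<delta> > 0"
    "\<And>t t' v v' z z'. t \<in> {0..T} \<Longrightarrow> t' \<in> {0..T} \<Longrightarrow> v \<in> Cb E \<Longrightarrow> v' \<in> Cb E \<Longrightarrow> z \<in> E \<Longrightarrow> z' \<in> E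
       \<Longrightarrow> supE E v \<le> R0 \<Longrightarrow> supE E v' \<le> R0 \<Longrightarrow> \<bar>t - t'\<bar> < \<delta> \<Longrightarrow> supE E (\<lambda>y. v y - v' y) < \<delta>
       \<Longrightarrow> \<bar>z - z'\<bar> < \<delta> \<Longrightarrow> \<bar>ghat t v z - ghat t' v' z'\<bar> < \<eta>"
proof -
  obtain \<delta> where \<delta>: "\<delta> > 0" and H: "\<forall>t\<in>{0..T}. \<forall>t'\<in>{0..T}. \<forall>v\<in>Cb E. \<forall>v'\<in>Cb E. \<forall>z\<in>E. \<forall>z'\<in>E.
        supE E v \<le> R0 \<and> supE E v' \<le> R0 \<and> \<bar>t - t'\<bar> < \<delta> \<and> supE E (\<lambda>y. v y - v' y) < \<delta> \<and>
        \<bar>z - z'\<bar> < \<delta> \<longrightarrow> \<bar>ghat t v z - ghat t' v' z'\<bar> < \<eta>"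
    using ghat_unif[rule_format, OF R0_pos assms] by blast
  show thesis by (rule that[OF \<delta>], rule H[rule_format]) simp_all
qed

lemma ghat_admissible_equicontinuous:
  assumes "\<eta> > 0"
  obtains \<delta> where "\<delta> > 0"
    "\<And>d s x x'. admissible d \<Longrightarrow> s \<in> {0..T} \<Longrightarrow> x \<in> E \<Longrightarrow> x' \<in> E \<Longrightarrow> \<bar>x - x'\<bar> < \<delta> \<Longrightarrow>
       \<bar>ghat s (d s) x - ghat s (d s) x'\<bar> < \<eta>"
proof -
  obtain \<delta> where \<delta>: "\<delta> > 0" "\<And>t t' v v' z z'. t \<in> {0..T} \<Longrightarrow> t' \<in> {0..T} \<Longrightarrow> v \<in> Cb E \<Longrightarrow> v' \<in> Cb E
       \<Longrightarrow> z \<in> E \<Longrightarrow> z' \<in> E \<Longrightarrow> supE E v \<le> R0 \<Longrightarrow> supE E v' \<le> R0 \<Longrightarrow> \<bar>t - t'\<bar> < \<delta>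
       \<Longrightarrow> supE E (\<lambda>y. v y - v' y) < \<delta> \<Longrightarrow> \<bar>z - z'\<bar> < \<delta> \<Longrightarrow> \<bar>ghat t v z - ghat t' v' z'\<bar> < \<eta>"
    using ghat_unif_R0[OF assms] by blast
  show thesis
  proof (rule that[OF \<delta>(1)])
    fix d s x x' assume d: "admissible d" and s: "s \<in> {0..T}" and x: "x \<in> E" "x' \<in> E"
      and "\<bar>x - x'\<bar> < \<delta>"
    moreover have "supE E (\<lambda>y. d s y - d s y) < \<delta>" using supE_const[OF E_ne, of 0] \<delta>(1) by simp
    ultimately show "\<bar>ghat s (d s) x - ghat s (d s) x'\<bar> < \<eta>"
      using \<delta>(2)[OF s s admissible_Cb[OF d s] admissible_Cb[OF d s] x] \<delta>(1)
        admissible_supE_le_R0[OF d s] by simp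
  qed
qed

lemma uniformly_continuous_on_ghat_admissible:
  assumes d: "admissible d"
  shows "uniformly_continuous_on ({0..T} \<times> E) (\<lambda>(s, x). ghat s (d s) x)"
proof (rule uniformly_continuous_on_pairI)
  fix \<eta> :: real assume "\<eta> > 0"
  then obtain \<delta> where \<delta>: "\<delta> > 0" "\<And>t t' v v' z z'. t \<in> {0..T} \<Longrightarrow> t' \<in> {0..T} \<Longrightarrow> v \<in> Cb E \<Longrightarrow> v' \<in> Cb E
       \<Longrightarrow> z \<in> E \<Longrightarrow> z' \<in> E \<Longrightarrow> supE E v \<le> R0 \<Longrightarrow> supE E v' \<le> R0 \<Longrightarrow> \<bar>t - t'\<bar> < \<delta>
       \<Longrightarrow> supE E (\<lambda>y. v y - v' y) < \<delta> \<Longrightarrow> \<bar>z - z'\<bar> < \<delta> \<Longrightarrow> \<bar>ghat t v z - ghat t' v' z'\<bar> < \<eta>"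
    using ghat_unif_R0 by blast
  have "continuous_on ({0..T} \<times> E) (\<lambda>(s, x). d s x)" using d unfolding admissible_def by simp
  then obtain \<delta>2 where \<delta>2: "\<delta>2 > 0" "\<And>a b a' b'. (a, b) \<in> {0..T} \<times> E \<Longrightarrow> (a', b') \<in> {0..T} \<times> E \<Longrightarrow>
      \<bar>a - a'\<bar> < \<delta>2 \<Longrightarrow> \<bar>b - b'\<bar> < \<delta>2 \<Longrightarrow> \<bar>(\<lambda>(s, x). d s x) (a, b) - (\<lambda>(s, x). d s x) (a', b')\<bar> < \<delta> / 2"
    using compact_uniformly_continuous_pairE[of _ _ "\<delta> / 2"] \<delta>(1) by (metis compact_Icc compact_Times half_gt_zero)
  show "\<exists>\<delta>>0. \<forall>s x s' x'. (s, x) \<in> {0..T} \<times> E \<longrightarrow> (s', x') \<in> {0..T} \<times> E \<longrightarrow> \<bar>s - s'\<bar> < \<delta> \<longrightarrow>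
      \<bar>x - x'\<bar> < \<delta> \<longrightarrow> \<bar>(\<lambda>(s, x). ghat s (d s) x) (s, x) - (\<lambda>(s, x). ghat s (d s) x) (s', x')\<bar> < \<eta>"
  proof (intro exI[of _ "min \<delta> \<delta>2"] conjI allI impI)
    fix s x s' x' assume h: "(s, x) \<in> {0..T} \<times> E" "(s', x') \<in> {0..T} \<times> E"
      "\<bar>s - s'\<bar> < min \<delta> \<delta>2" "\<bar>x - x'\<bar> < min \<delta> \<delta>2"
    have "supE E (\<lambda>y. d s y - d s' y) \<le> \<delta> / 2"
      by (rule supE_least[OF E_ne]) (use h \<delta>2 in \<open>force intro: less_imp_le\<close>)
    then show "\<bar>(\<lambda>(s, x). ghat s (d s) x) (s, x) - (\<lambda>(s, x). ghat s (d s) x) (s', x')\<bar> < \<eta>"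
      using \<delta>(2)[of s s' "d s" "d s'" x x'] h \<delta>(1) admissible_Cb[OF d] admissible_supE_le_R0[OF d] by auto
  qed (use \<delta>(1) \<delta>2(1) in simp)
qed

lemma continuous_on_ghat_admissible:
  "admissible d \<Longrightarrow> continuous_on ({0..T} \<times> E) (\<lambda>(s, x). ghat s (d s) x)"
  by (rule uniformly_continuous_imp_continuous[OF uniformly_continuous_on_ghat_admissible])

definition "Ghat d s x = integral {l..x} (ghat s (d s))"

lemma continuous_on_Ghat:
  assumes "admissible d" shows "continuous_on ({0..T} \<times> E) (\<lambda>(s, x). Ghat d s x)"
  unfolding Ghat_def
  using continuous_on_integral_upper_limit[of "{0..T}" l r "\<lambda>s. ghat s (d s)"]
    continuous_on_ghat_admissible[OF assms] lr by simp

lemma Ghat_has_derivative: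
  assumes "admissible d" "s \<in> {0..T}" "x \<in> E"
  shows "(Ghat d s has_real_derivative ghat s (d s) x) (at x within E)"
  unfolding Ghat_def
  using integral_has_real_derivative admissible_Cb[OF assms(1,2)] ghat_Cb[OF assms(2)] assms(3)
  unfolding Cb_def by blast

lemma Ghat_lipschitz:
  assumes "admissible d" "s \<in> {0..T}" "x \<in> E" "x' \<in> E"
  shows "\<bar>Ghat d s x - Ghat d s x'\<bar> \<le> ghat_max * \<bar>x - x'\<bar>"
  using field_differentiable_bound[of E "Ghat d s" "ghat s (d s)" ghat_max x x']
    Ghat_has_derivative[OF assms(1,2)] ghat_admissible_bound(2)[OF assms(1,2)] assms(3,4)
  by auto

lemma g_increment_eq_Ghat:
  assumes d: "admissible d" and s: "s \<in> {0..T}" and v: "C1b_deriv E v (d s)" and x: "x \<in> E"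
  shows "g s v x - g s v l = Ghat d s x"
proof -
  have "(ghat s (d s) has_integral (g s v x - g s v l)) {l..x}"
  proof (rule fundamental_theorem_of_calculus)
    fix z assume "z \<in> {l..x}"
    then have "(g s v has_real_derivative ghat s (d s) z) (at z within {l..x})"
      using has_field_derivative_subset[OF g_deriv[OF s v]] x by auto
    then show "(g s v has_vector_derivative ghat s (d s) z) (at z within {l..x})"
      by (simp add: has_real_derivative_iff_has_vector_derivative)
  qed (use x in simp)
  then show ?thesis unfolding Ghat_def by (simp add: integral_unique)
qed

end

context transport_problem
begin

lemma h'_cont: "continuous_on E h'"
  and h_has_derivative: "x \<in> E \<Longrightarrow> (h has_real_derivative h' x) (at x within E)"
  using h_C1 unfolding C1b_deriv_def by simp_all

text \<open>\<open>Phi d\<close> is the formal \<open>y\<close>-derivative of the representation formula for \<open>u\<close>, with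
  \<open>ghat s (d s)\<close> standing for the spatial derivative of \<open>g s (u s)\<close>; \<open>Psi d\<close> is a
  \<open>y\<close>-antiderivative of it, normalised to vanish at \<open>y = l\<close>.\<close>
definition "Phi d t y = h' (Z t y T) * dZ t y T + integral {t..T} (\<lambda>s. ghat s (d s) (Z t y s) * dZ t y s)"
definition "Psi d t y = h (Z t y T) - h (Z t l T) + integral {t..T} (\<lambda>s. Ghat d s (Z t y s) - Ghat d s (Z t l s))"

lemma continuous_on_ghat_Z_dZ:
  assumes "admissible d" "t \<in> {0..T}" "y \<in> E"
  shows "continuous_on {t..T} (\<lambda>s. ghat s (d s) (Z t y s) * dZ t y s)"
  using continuous_on_compose_Z[OF continuous_on_ghat_admissible[OF assms(1)] assms(2,3)]
    continuous_on_dZ[OF assms(2,3)] by (rule continuous_on_mult)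

lemma continuous_on_Phi:
  assumes d: "admissible d" shows "continuous_on ({0..T} \<times> E) (\<lambda>(t, y). Phi d t y)"
proof -
  define F where "F p s = ghat s (d s) (Zext (fst p) (snd p) s) * dZext (fst p) (snd p) s"
    for p :: "real \<times> real" and s
  have cF: "continuous_on (({0..T} \<times> E) \<times> {0..T}) (\<lambda>(p, s). F p s)"
    unfolding F_def using continuous_on_compose_Zext[OF continuous_on_ghat_admissible[OF d]]
      continuous_on_dZext_pair by (simp add: case_prod_beta continuous_on_mult)
  have c1: "continuous_on ({0..T} \<times> E) (\<lambda>p. integral {fst p..T} (F p))"
    by (rule continuous_on_integral_varying_bounds[OF _ cF])
       (auto intro!: continuous_intros simp: compact_Times)
  have "continuous_on ({0..T} \<times> E) (\<lambda>p. (\<lambda>(p, s). Zext (fst p) (snd p) s) (p, T))"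
    by (rule continuous_on_compose2[OF continuous_on_Zext_pair])
       (use T_pos in \<open>auto intro!: continuous_intros\<close>)
  moreover have "continuous_on ({0..T} \<times> E) (\<lambda>p. (\<lambda>(p, s). dZext (fst p) (snd p) s) (p, T))"
    by (rule continuous_on_compose2[OF continuous_on_dZext_pair])
       (use T_pos in \<open>auto intro!: continuous_intros\<close>)
  moreover have "(\<lambda>p. Zext (fst p) (snd p) T) ` ({0..T} \<times> E) \<subseteq> E"
    using Zext_in T_pos by auto
  ultimately have c2: "continuous_on ({0..T} \<times> E) (\<lambda>p. h' (Zext (fst p) (snd p) T) * dZext (fst p) (snd p) T)"
    using continuous_on_compose2[OF h'_cont, of "{0..T} \<times> E" "\<lambda>p. Zext (fst p) (snd p) T"]
    by (auto intro!: continuous_intros)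
  have "Phi d t y = h' (Zext t y T) * dZext t y T + integral {t..T} (F (t, y))"
    if "(t, y) \<in> {0..T} \<times> E" for t y
    using that unfolding Phi_def F_def
    by (auto simp: Zext_eq dZext_eq intro!: integral_cong)
  then show ?thesis
    by (intro continuous_on_eq[OF continuous_on_add[OF c2 c1]]) auto
qed

lemma Phi_bound:
  assumes d: "admissible d" and t: "t \<in> {0..T}" and y: "y \<in> E"
  shows "\<bar>Phi d t y\<bar> \<le> A0 * exp (growth * (T - t))"
proof -
  define gB where "gB s = Jmax * Kg + Jmax * Lg * A0 * exp (growth * (T - s))" for s
  have "(gB has_integral Jmax * Kg * (T - t) + Jmax * Lg * A0 * ((exp (growth * (T - t)) - 1) / growth)) {t..T}"
    unfolding gB_def using t growth_pos
    using has_integral_const_real[of "Jmax * Kg" t T]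
    by (intro has_integral_add has_integral_mult_right has_integral_exp_affine) (auto simp: mult.commute)
  then have gB: "gB integrable_on {t..T}"
    "integral {t..T} gB = Jmax * Kg * (T - t) + (Jmax * Lg / growth) * A0 * (exp (growth * (T - t)) - 1)"
    by (auto simp: integral_unique has_integral_integrable)
  have "norm (integral {t..T} (\<lambda>s. ghat s (d s) (Z t y s) * dZ t y s)) \<le> integral {t..T} gB"
  proof (rule integral_norm_bound_integral[OF integrable_continuous_interval[OF
        continuous_on_ghat_Z_dZ[OF d t y]] gB(1)])
    fix s assume s: "s \<in> {t..T}"
    then have s0: "s \<in> {0..T}" using t by auto
    have "\<bar>ghat s (d s) (Z t y s)\<bar> * \<bar>dZ t y s\<bar> \<le> (Lg * (A0 * exp (growth * (T - s))) + Kg) * Jmax"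
      using ghat_admissible_bound(1)[OF d s0 Z_in[OF t y s]] dZ_bounds[OF t y s]
      by (intro mult_mono) auto
    then show "norm (ghat s (d s) (Z t y s) * dZ t y s) \<le> gB s"
      unfolding gB_def by (simp add: abs_mult algebra_simps)
  qed
  then have "\<bar>integral {t..T} (\<lambda>s. ghat s (d s) (Z t y s) * dZ t y s)\<bar> \<le> integral {t..T} gB"
    by simp
  also have "integral {t..T} gB \<le> Jmax * Kg * T + A0 * (exp (growth * (T - t)) - 1)"
  proof -
    have "Jmax * Lg / growth \<le> 1" using growth_pos unfolding growth_def by (simp add: divide_le_eq)
    moreover have "0 \<le> A0 * (exp (growth * (T - t)) - 1)" using A0_nonneg growth_pos t by simp
    ultimately have "(Jmax * Lg / growth) * (A0 * (exp (growth * (T - t)) - 1))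
        \<le> 1 * (A0 * (exp (growth * (T - t)) - 1))"
      by (rule mult_right_mono)
    moreover have "Jmax * Kg * (T - t) \<le> Jmax * Kg * T"
      using t Jmax_ge_1 Kg_nonneg by (intro mult_left_mono) auto
    ultimately show ?thesis unfolding gB(2) by (simp only: mult.assoc mult_1)
  qed
  finally have I: "\<bar>integral {t..T} (\<lambda>s. ghat s (d s) (Z t y s) * dZ t y s)\<bar>
      \<le> Jmax * Kg * T + A0 * (exp (growth * (T - t)) - 1)" .
  have "\<bar>h' (Z t y T) * dZ t y T\<bar> \<le> H1 * Jmax"
    unfolding abs_mult using h'_bound[OF Z_in[OF t y]] dZ_bounds[OF t y, of T] t H1_nonneg
    by (intro mult_mono) auto
  then show ?thesis using I unfolding Phi_def A0_def by (simp add: algebra_simps)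
qed

lemma admissible_Phi: "admissible d \<Longrightarrow> admissible (Phi d)"
  unfolding admissible_def[of "Phi d"] using continuous_on_Phi Phi_bound by auto

end

context transport_problem
begin

lemma Phi_diff_le:
  assumes d: "admissible d" and t: "t \<in> {0..T}" and y: "y \<in> E" "y' \<in> E"
    and hZ: "\<bar>h' (Z t y T) - h' (Z t y' T)\<bar> \<le> e"
    and gZ: "\<And>s. s \<in> {t..T} \<Longrightarrow> \<bar>ghat s (d s) (Z t y s) - ghat s (d s) (Z t y' s)\<bar> \<le> e"
    and dZ: "\<And>s. s \<in> {t..T} \<Longrightarrow> \<bar>dZ t y s - dZ t y' s\<bar> \<le> e"
  shows "\<bar>Phi d t y - Phi d t y'\<bar> \<le> e * (Jmax + H1 + ghat_max) * (T + 1)"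
proof -
  have tT: "T \<in> {t..T}" using t by simp
  have e: "0 \<le> e" using dZ[OF tT] by linarith
  have A: "\<bar>h' (Z t y T) * dZ t y T - h' (Z t y' T) * dZ t y' T\<bar> \<le> e * Jmax + H1 * e"
    using dZ_bounds[OF t y(1) tT] hZ h'_bound[OF Z_in[OF t y(2) tT]] dZ[OF tT]
    by (intro abs_mult_diff_le) auto
  have i: "(\<lambda>s. ghat s (d s) (Z t x s) * dZ t x s) integrable_on {t..T}" if "x \<in> E" for x
    by (rule integrable_continuous_interval[OF continuous_on_ghat_Z_dZ[OF d t that]])
  have "\<bar>integral {t..T} (\<lambda>s. ghat s (d s) (Z t y s) * dZ t y s)
      - integral {t..T} (\<lambda>s. ghat s (d s) (Z t y' s) * dZ t y' s)\<bar> \<le> (e * Jmax + ghat_max * e) * (T - t)"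
  proof (rule abs_integral_diff_le[OF _ i[OF y(1)] i[OF y(2)]])
    fix s assume s: "s \<in> {t..T}"
    then have s0: "s \<in> {0..T}" using t by auto
    show "\<bar>ghat s (d s) (Z t y s) * dZ t y s - ghat s (d s) (Z t y' s) * dZ t y' s\<bar> \<le> e * Jmax + ghat_max * e"
      using dZ_bounds[OF t y(1) s] gZ[OF s] ghat_admissible_bound(2)[OF d s0 Z_in[OF t y(2) s]] dZ[OF s]
      by (intro abs_mult_diff_le) auto
  qed (use t in auto)
  also have "\<dots> \<le> (e * Jmax + ghat_max * e) * T"
    using e t Jmax_ge_1 ghat_max_nonneg by (intro mult_left_mono) auto
  finally have B: "\<bar>integral {t..T} (\<lambda>s. ghat s (d s) (Z t y s) * dZ t y s)
      - integral {t..T} (\<lambda>s. ghat s (d s) (Z t y' s) * dZ t y' s)\<bar> \<le> (e * Jmax + ghat_max * e) * T" .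
  have "\<bar>Phi d t y - Phi d t y'\<bar> \<le> e * Jmax + H1 * e + (e * Jmax + ghat_max * e) * T"
    using A B unfolding Phi_def by linarith
  also have "\<dots> \<le> e * (Jmax + H1 + ghat_max) * (T + 1)"
    using e T_pos ghat_max_nonneg H1_nonneg by (simp add: algebra_simps mult_nonneg_nonneg)
  finally show ?thesis .
qed

lemma Phi_equicontinuous:
  assumes \<eta>: "\<eta> > 0"
  obtains \<delta> where "\<delta> > 0" "\<And>d t y y'. admissible d \<Longrightarrow> t \<in> {0..T} \<Longrightarrow> y \<in> E \<Longrightarrow> y' \<in> E \<Longrightarrow>
      \<bar>y - y'\<bar> < \<delta> \<Longrightarrow> \<bar>Phi d t y - Phi d t y'\<bar> \<le> \<eta>"
proof -
  define M where "M = (Jmax + H1 + ghat_max) * (T + 1)"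
  have M: "M > 0" unfolding M_def using Jmax_ge_1 H1_nonneg ghat_max_nonneg T_pos by simp
  define e where "e = \<eta> / M"
  have e: "e > 0" unfolding e_def using \<eta> M by simp
  have J0: "Jmax > 0" using Jmax_ge_1 by simp
  obtain \<delta>h where \<delta>h: "\<delta>h > 0" "\<And>x x'. x \<in> E \<Longrightarrow> x' \<in> E \<Longrightarrow> \<bar>x - x'\<bar> < \<delta>h \<Longrightarrow> \<bar>h' x - h' x'\<bar> < e"
    using compact_uniformly_continuous_realE[OF compact_Icc h'_cont e] by blast
  obtain \<delta>g where \<delta>g: "\<delta>g > 0" "\<And>d s x x'. admissible d \<Longrightarrow> s \<in> {0..T} \<Longrightarrow> x \<in> E \<Longrightarrow> x' \<in> E \<Longrightarrow>
      \<bar>x - x'\<bar> < \<delta>g \<Longrightarrow> \<bar>ghat s (d s) x - ghat s (d s) x'\<bar> < e"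
    using ghat_admissible_equicontinuous[OF e] by blast
  obtain \<delta>J where \<delta>J: "\<delta>J > 0" "\<And>a b c a' b' c'. (a, b, c) \<in> {0..T} \<times> E \<times> {0..T} \<Longrightarrow>
      (a', b', c') \<in> {0..T} \<times> E \<times> {0..T} \<Longrightarrow> \<bar>a - a'\<bar> < \<delta>J \<Longrightarrow> \<bar>b - b'\<bar> < \<delta>J \<Longrightarrow> \<bar>c - c'\<bar> < \<delta>J \<Longrightarrow>
      \<bar>(\<lambda>(t, y, s). dZext t y s) (a, b, c) - (\<lambda>(t, y, s). dZext t y s) (a', b', c')\<bar> < e"
    using compact_uniformly_continuous_tripleE[OF _ continuous_on_dZext e] by (auto simp: compact_Times)
  show thesis
  proof (rule that[of "min (min (\<delta>h / Jmax) (\<delta>g / Jmax)) \<delta>J"])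
    show "min (min (\<delta>h / Jmax) (\<delta>g / Jmax)) \<delta>J > 0" using \<delta>h(1) \<delta>g(1) \<delta>J(1) J0 by simp
    fix d t y y' assume d: "admissible d" and t: "t \<in> {0..T}" and y: "y \<in> E" "y' \<in> E"
      and yy: "\<bar>y - y'\<bar> < min (min (\<delta>h / Jmax) (\<delta>g / Jmax)) \<delta>J"
    have tT: "T \<in> {t..T}" using t by simp
    have zz: "\<bar>Z t y s - Z t y' s\<bar> < min \<delta>h \<delta>g" if "s \<in> {t..T}" for s
    proof -
      have "\<bar>Z t y s - Z t y' s\<bar> \<le> Jmax * \<bar>y - y'\<bar>" by (rule Z_lipschitz_initial[OF t y that])
      also have "\<dots> < min \<delta>h \<delta>g" using yy J0 by (simp add: field_simps)
      finally show ?thesis .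
    qed
    have "\<bar>Phi d t y - Phi d t y'\<bar> \<le> e * M"
      unfolding M_def mult.assoc[symmetric]
    proof (rule Phi_diff_le[OF d t y])
      show "\<bar>h' (Z t y T) - h' (Z t y' T)\<bar> \<le> e"
        using \<delta>h(2)[OF Z_in[OF t y(1) tT] Z_in[OF t y(2) tT]] zz[OF tT] by fastforce
      fix s assume s: "s \<in> {t..T}"
      have s0: "s \<in> {0..T}" using s t by auto
      show "\<bar>ghat s (d s) (Z t y s) - ghat s (d s) (Z t y' s)\<bar> \<le> e"
        using \<delta>g(2)[OF d s0 Z_in[OF t y(1) s] Z_in[OF t y(2) s]] zz[OF s] by simp
      have "(t, y, s) \<in> {0..T} \<times> E \<times> {0..T}" "(t, y', s) \<in> {0..T} \<times> E \<times> {0..T}"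
        using t y s0 by auto
      then have "\<bar>dZext t y s - dZext t y' s\<bar> < e" using \<delta>J(2) \<delta>J(1) yy by fastforce
      then show "\<bar>dZ t y s - dZ t y' s\<bar> \<le> e" using s by (simp add: dZext_eq)
    qed
    then show "\<bar>Phi d t y - Phi d t y'\<bar> \<le> \<eta>" unfolding e_def using M by simp
  qed
qed

lemma compose_Z_remainder_le:
  assumes t: "t \<in> {0..T}" and y: "y \<in> E" "y' \<in> E" and s: "s \<in> {t..T}"
    and F: "\<And>x. x \<in> E \<Longrightarrow> (F has_real_derivative F' x) (at x within E)"
    and M: "\<And>x. x \<in> E \<Longrightarrow> \<bar>F' x\<bar> \<le> M"
    and close: "\<And>x. x \<in> E \<Longrightarrow> \<bar>x - Z t y s\<bar> \<le> \<bar>Z t y' s - Z t y s\<bar> \<Longrightarrow> \<bar>F' x - F' (Z t y s)\<bar> \<le> e"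
    and lin: "\<bar>Z t y' s - Z t y s - dZ t y s * (y' - y)\<bar> \<le> e * \<bar>y' - y\<bar>"
    and e: "0 \<le> e"
  shows "\<bar>F (Z t y' s) - F (Z t y s) - F' (Z t y s) * dZ t y s * (y' - y)\<bar> \<le> e * (Jmax + M) * \<bar>y' - y\<bar>"
proof -
  have "\<bar>F (Z t y' s) - F (Z t y s) - F' (Z t y s) * (Z t y' s - Z t y s)\<bar> \<le> e * \<bar>Z t y' s - Z t y s\<bar>"
    by (rule derivative_remainder_le[of E]) (use F close Z_in[OF t y(1) s] Z_in[OF t y(2) s] in auto)
  also have "\<dots> \<le> e * (Jmax * \<bar>y' - y\<bar>)"
    using Z_lipschitz_initial[OF t y(2,1) s] e by (simp add: mult_left_mono)
  finally have 1: "\<bar>F (Z t y' s) - F (Z t y s) - F' (Z t y s) * (Z t y' s - Z t y s)\<bar> \<le> e * (Jmax * \<bar>y' - y\<bar>)" .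
  have 2: "\<bar>F' (Z t y s)\<bar> * \<bar>Z t y' s - Z t y s - dZ t y s * (y' - y)\<bar> \<le> M * (e * \<bar>y' - y\<bar>)"
    using M[OF Z_in[OF t y(1) s]] lin by (intro mult_mono) auto
  have "e * (Jmax * \<bar>y' - y\<bar>) + M * (e * \<bar>y' - y\<bar>) = e * (Jmax + M) * \<bar>y' - y\<bar>"
    by (simp add: algebra_simps)
  then show ?thesis
    using abs_chain_remainder_le[of F "Z t y' s" "Z t y s" F' "dZ t y s" "y' - y"] 1 2 by linarith
qed

end

context transport_problem
begin

lemma Psi_remainder_le:
  assumes d: "admissible d" and t: "t \<in> {0..T}" and y: "y \<in> E" "y' \<in> E" and e: "0 \<le> e"
    and lin: "\<And>s. s \<in> {t..T} \<Longrightarrow> \<bar>Z t y' s - Z t y s - dZ t y s * (y' - y)\<bar> \<le> e * \<bar>y' - y\<bar>"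
    and h'_close: "\<And>x. x \<in> E \<Longrightarrow> \<bar>x - Z t y T\<bar> \<le> \<bar>Z t y' T - Z t y T\<bar> \<Longrightarrow> \<bar>h' x - h' (Z t y T)\<bar> \<le> e"
    and ghat_close: "\<And>s x. s \<in> {t..T} \<Longrightarrow> x \<in> E \<Longrightarrow> \<bar>x - Z t y s\<bar> \<le> \<bar>Z t y' s - Z t y s\<bar> \<Longrightarrow>
      \<bar>ghat s (d s) x - ghat s (d s) (Z t y s)\<bar> \<le> e"
  shows "\<bar>Psi d t y' - Psi d t y - Phi d t y * (y' - y)\<bar> \<le> e * (Jmax + H1 + ghat_max) * (T + 1) * \<bar>y' - y\<bar>"
proof -
  have tT: "T \<in> {t..T}" using t by simp
  have H: "\<bar>h (Z t y' T) - h (Z t y T) - h' (Z t y T) * dZ t y T * (y' - y)\<bar> \<le> e * (Jmax + H1) * \<bar>y' - y\<bar>"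
    by (rule compose_Z_remainder_le[OF t y tT h_has_derivative h'_bound h'_close lin[OF tT] e])
  have G: "\<bar>Ghat d s (Z t y' s) - Ghat d s (Z t y s) - ghat s (d s) (Z t y s) * dZ t y s * (y' - y)\<bar>
      \<le> e * (Jmax + ghat_max) * \<bar>y' - y\<bar>" if s: "s \<in> {t..T}" for s
  proof -
    have s0: "s \<in> {0..T}" using s t by auto
    show ?thesis
      by (rule compose_Z_remainder_le[OF t y s Ghat_has_derivative[OF d s0]
            ghat_admissible_bound(2)[OF d s0] ghat_close[OF s] lin[OF s] e])
  qed
  have GZ: "continuous_on {t..T} (\<lambda>s. Ghat d s (Z t x s))" if "x \<in> E" for x
    by (rule continuous_on_compose_Z[OF continuous_on_Ghat[OF d] t that])
  have I: "integral {t..T} (\<lambda>s. Ghat d s (Z t y' s) - Ghat d s (Z t l s))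
      - integral {t..T} (\<lambda>s. Ghat d s (Z t y s) - Ghat d s (Z t l s))
      - integral {t..T} (\<lambda>s. ghat s (d s) (Z t y s) * dZ t y s) * (y' - y)
    = integral {t..T} (\<lambda>s. Ghat d s (Z t y' s) - Ghat d s (Z t y s)
        - ghat s (d s) (Z t y s) * dZ t y s * (y' - y))"
    using GZ[OF y(1)] GZ[OF y(2)] GZ[OF l_in_E] continuous_on_ghat_Z_dZ[OF d t y(1)]
    by (simp add: integral_diff integral_mult_left integrable_continuous_interval
        integrable_diff integrable_on_mult_left)
  have "\<bar>integral {t..T} (\<lambda>s. Ghat d s (Z t y' s) - Ghat d s (Z t y s)
        - ghat s (d s) (Z t y s) * dZ t y s * (y' - y))\<bar> \<le> e * (Jmax + ghat_max) * \<bar>y' - y\<bar> * (T - t)"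
    using G t GZ[OF y(1)] GZ[OF y(2)] continuous_on_ghat_Z_dZ[OF d t y(1)]
    by (intro abs_integral_le) (auto intro!: integrable_continuous_interval continuous_intros)
  also have "\<dots> \<le> e * (Jmax + ghat_max) * \<bar>y' - y\<bar> * T"
    using e t Jmax_ge_1 ghat_max_nonneg by (intro mult_left_mono) auto
  moreover have "Psi d t y' - Psi d t y - Phi d t y * (y' - y)
      = (h (Z t y' T) - h (Z t y T) - h' (Z t y T) * dZ t y T * (y' - y))
        + integral {t..T} (\<lambda>s. Ghat d s (Z t y' s) - Ghat d s (Z t y s)
            - ghat s (d s) (Z t y s) * dZ t y s * (y' - y))"
    unfolding Psi_def Phi_def I[symmetric] by (simp add: algebra_simps)
  ultimately have "\<bar>Psi d t y' - Psi d t y - Phi d t y * (y' - y)\<bar>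
      \<le> e * (Jmax + H1) * \<bar>y' - y\<bar> + e * (Jmax + ghat_max) * \<bar>y' - y\<bar> * T"
    using H by linarith
  also have "\<dots> \<le> e * (Jmax + H1 + ghat_max) * (T + 1) * \<bar>y' - y\<bar>"
    using e T_pos H1_nonneg ghat_max_nonneg by (simp add: algebra_simps mult_nonneg_nonneg)
  finally show ?thesis .
qed

lemma Psi_has_derivative:
  assumes d: "admissible d" and t: "t \<in> {0..T}" and y: "y \<in> E"
  shows "(Psi d t has_real_derivative Phi d t y) (at y within E)"
proof (rule has_real_derivative_by_remainder)
  fix \<eta> :: real assume \<eta>: "\<eta> > 0"
  define M where "M = (Jmax + H1 + ghat_max) * (T + 1)"
  have M: "M > 0" unfolding M_def using Jmax_ge_1 H1_nonneg ghat_max_nonneg T_pos by simp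
  define e where "e = \<eta> / M"
  have e: "e > 0" unfolding e_def using \<eta> M by simp
  have J0: "Jmax > 0" using Jmax_ge_1 by simp
  obtain \<delta>z where \<delta>z: "\<delta>z > 0" "\<And>t y y' s. t \<in> {0..T} \<Longrightarrow> y \<in> E \<Longrightarrow> y' \<in> E \<Longrightarrow> s \<in> {t..T} \<Longrightarrow>
      \<bar>y' - y\<bar> < \<delta>z \<Longrightarrow> \<bar>Z t y' s - Z t y s - dZ t y s * (y' - y)\<bar> \<le> e * \<bar>y' - y\<bar>"
    using Z_linear_approx[OF e] by blast
  obtain \<delta>h where \<delta>h: "\<delta>h > 0" "\<And>x x'. x \<in> E \<Longrightarrow> x' \<in> E \<Longrightarrow> \<bar>x - x'\<bar> < \<delta>h \<Longrightarrow> \<bar>h' x - h' x'\<bar> < e"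
    using compact_uniformly_continuous_realE[OF compact_Icc h'_cont e] by blast
  obtain \<delta>g where \<delta>g: "\<delta>g > 0" "\<And>d s x x'. admissible d \<Longrightarrow> s \<in> {0..T} \<Longrightarrow> x \<in> E \<Longrightarrow> x' \<in> E \<Longrightarrow>
      \<bar>x - x'\<bar> < \<delta>g \<Longrightarrow> \<bar>ghat s (d s) x - ghat s (d s) x'\<bar> < e"
    using ghat_admissible_equicontinuous[OF e] by blast
  show "\<exists>\<delta>>0. \<forall>y'\<in>E. \<bar>y' - y\<bar> < \<delta> \<longrightarrow> \<bar>Psi d t y' - Psi d t y - Phi d t y * (y' - y)\<bar> \<le> \<eta> * \<bar>y' - y\<bar>"
  proof (intro exI[of _ "min \<delta>z (min (\<delta>h / Jmax) (\<delta>g / Jmax))"] conjI ballI impI)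
    show "min \<delta>z (min (\<delta>h / Jmax) (\<delta>g / Jmax)) > 0" using \<delta>z(1) \<delta>h(1) \<delta>g(1) J0 by simp
    fix y' assume y': "y' \<in> E" and yy: "\<bar>y' - y\<bar> < min \<delta>z (min (\<delta>h / Jmax) (\<delta>g / Jmax))"
    have close: "\<bar>x - Z t y s\<bar> < min \<delta>h \<delta>g"
      if "s \<in> {t..T}" "\<bar>x - Z t y s\<bar> \<le> \<bar>Z t y' s - Z t y s\<bar>" for s x
    proof -
      have "\<bar>Z t y' s - Z t y s\<bar> \<le> Jmax * \<bar>y' - y\<bar>" by (rule Z_lipschitz_initial[OF t y' y that(1)])
      also have "\<dots> < min \<delta>h \<delta>g" using yy J0 by (simp add: field_simps)
      finally show ?thesis using that(2) by linarith
    qed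
    have "\<bar>Psi d t y' - Psi d t y - Phi d t y * (y' - y)\<bar> \<le> e * M * \<bar>y' - y\<bar>"
      unfolding M_def mult.assoc[symmetric]
    proof (rule Psi_remainder_le[OF d t y y' less_imp_le[OF e]])
      show "\<bar>Z t y' s - Z t y s - dZ t y s * (y' - y)\<bar> \<le> e * \<bar>y' - y\<bar>" if "s \<in> {t..T}" for s
        using \<delta>z(2)[OF t y y' that] yy by simp
      show "\<bar>h' x - h' (Z t y T)\<bar> \<le> e" if "x \<in> E" "\<bar>x - Z t y T\<bar> \<le> \<bar>Z t y' T - Z t y T\<bar>" for x
        using \<delta>h(2)[OF that(1) Z_in[OF t y]] close[of T x] that t by fastforce
      show "\<bar>ghat s (d s) x - ghat s (d s) (Z t y s)\<bar> \<le> e"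
        if "s \<in> {t..T}" "x \<in> E" "\<bar>x - Z t y s\<bar> \<le> \<bar>Z t y' s - Z t y s\<bar>" for s x
      proof -
        have "s \<in> {0..T}" using that(1) t by auto
        then show ?thesis
          using \<delta>g(2)[OF d _ that(2) Z_in[OF t y that(1)]] close[OF that(1,3)] by fastforce
      qed
    qed
    then show "\<bar>Psi d t y' - Psi d t y - Phi d t y * (y' - y)\<bar> \<le> \<eta> * \<bar>y' - y\<bar>"
      unfolding e_def using M by simp
  qed
qed

end

context transport_problem
begin

lemma L_nonneg: "0 \<le> L"
proof -
  have 0: "(0::real) \<in> {0..T}" using T_pos by simp
  have c: "(\<lambda>z. c) \<in> Cb E" for c :: real unfolding Cb_def by simp
  have "\<bar>g 0 (\<lambda>z. 1) l - g 0 (\<lambda>z. 0) l\<bar> \<le> supE E (\<lambda>z. g 0 (\<lambda>z. 1) z - g 0 (\<lambda>z. 0) z)"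
    using g_Cb[OF 0 c] l_in_E by (intro abs_le_supE) (auto intro!: continuous_intros simp: Cb_def)
  also have "\<dots> \<le> L * supE E (\<lambda>z. (1::real) - 0)" by (rule g_lipschitz[OF 0 c c])
  finally show ?thesis using supE_const[OF E_ne, of 1] by simp
qed

lemma continuous_on_u_slice: "s \<in> {0..T} \<Longrightarrow> continuous_on E (u s)"
  using continuous_on_slice[OF u_cont] by simp

lemma u_bounded:
  obtains U where "\<And>t y. t \<in> {0..T} \<Longrightarrow> y \<in> E \<Longrightarrow> \<bar>u t y\<bar> \<le> U"
  using compact_imp_bounded[OF compact_continuous_image[OF u_cont]] unfolding bounded_iff
  by (force simp: compact_Times)

lemma u_increment_minus_Psi:
  assumes d: "admissible d" and v: "\<And>s. s \<in> {0..T} \<Longrightarrow> C1b_deriv E (v s) (d s)"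
    and t: "t \<in> {0..T}" and y: "y \<in> E"
  defines "D s \<equiv> (g s (u s) (Z t y s) - g s (v s) (Z t y s)) - (g s (u s) (Z t l s) - g s (v s) (Z t l s))"
  shows "(D has_integral (u t y - u t l - Psi d t y)) {t..T}"
proof -
  have GZ: "((\<lambda>s. Ghat d s (Z t y s) - Ghat d s (Z t l s)) has_integral
      integral {t..T} (\<lambda>s. Ghat d s (Z t y s) - Ghat d s (Z t l s))) {t..T}"
    using continuous_on_diff[OF continuous_on_compose_Z[OF continuous_on_Ghat[OF d] t y]
      continuous_on_compose_Z[OF continuous_on_Ghat[OF d] t l_in_E]]
    by (intro integrable_integral integrable_continuous_interval)
  have "(u t y - h (Z t y T)) - (u t l - h (Z t l T))
      - integral {t..T} (\<lambda>s. Ghat d s (Z t y s) - Ghat d s (Z t l s)) = u t y - u t l - Psi d t y"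
    unfolding Psi_def by simp
  with has_integral_diff[OF has_integral_diff[OF u_repr[OF t y] u_repr[OF t l_in_E]] GZ]
  have "((\<lambda>s. (g s (u s) (Z t y s) - g s (u s) (Z t l s)) - (Ghat d s (Z t y s) - Ghat d s (Z t l s)))
      has_integral (u t y - u t l - Psi d t y)) {t..T}"
    by (simp only:)
  moreover have "(g s (u s) (Z t y s) - g s (u s) (Z t l s)) - (Ghat d s (Z t y s) - Ghat d s (Z t l s)) = D s"
    if "s \<in> {t..T}" for s
  proof -
    have s0: "s \<in> {0..T}" using that t by auto
    show ?thesis
      using g_increment_eq_Ghat[OF d s0 v[OF s0] Z_in[OF t y that]]
        g_increment_eq_Ghat[OF d s0 v[OF s0] Z_in[OF t l_in_E that]]
      unfolding D_def by linarith
  qed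
  ultimately show ?thesis by (rule has_integral_eq[rotated])
qed

text \<open>Picard iteration for the spatial derivative; \<open>w_iter n t\<close> approximates \<open>u t - u t l\<close>
  (\<open>w_iter_error\<close>).\<close>
definition "d_iter n = (Phi ^^ n) (\<lambda>s x. 0)"
definition "w_iter n = (case n of 0 \<Rightarrow> (\<lambda>t y. 0) | Suc m \<Rightarrow> Psi (d_iter m))"

lemma d_iter_Suc: "d_iter (Suc n) = Phi (d_iter n)" and w_iter_Suc: "w_iter (Suc n) = Psi (d_iter n)"
  unfolding d_iter_def w_iter_def by simp_all

lemma admissible_d_iter: "admissible (d_iter n)"
  by (induction n) (simp_all add: d_iter_def admissible_0 admissible_Phi)

lemma w_iter_has_derivative:
  assumes "t \<in> {0..T}" "y \<in> E"
  shows "(w_iter n t has_real_derivative d_iter n t y) (at y within E)"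
proof (cases n)
  case 0
  then show ?thesis by (simp add: w_iter_def d_iter_def)
next
  case (Suc m)
  then show ?thesis
    using Psi_has_derivative[OF admissible_d_iter assms, of m] by (simp add: w_iter_Suc d_iter_Suc)
qed

end

context transport_problem
begin

definition "picard_bound U n t = 2 * U * (2 * L * (T - t)) ^ n / fact n"

lemma picard_bound_has_integral:
  assumes t: "t \<in> {0..T}"
  shows "((\<lambda>s. 2 * L * picard_bound U m s) has_integral picard_bound U (Suc m) t) {t..T}"
proof -
  define G where "G s = - (2 * U / fact (Suc m)) * (2 * L * (T - s)) ^ Suc m" for s
  have "(G has_real_derivative 2 * L * picard_bound U m s) (at s within {t..T})" for s
  proof -
    have "((\<lambda>s. (2 * L * (T - s)) ^ Suc m) has_real_derivative
        real (Suc m) * (2 * L * (T - s)) ^ (Suc m - 1) * (2 * L * (0 - 1))) (at s within {t..T})"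
      by (rule derivative_eq_intros refl | simp)+
    then have "(G has_real_derivative
        - (2 * U / fact (Suc m)) * (real (Suc m) * (2 * L * (T - s)) ^ m * (2 * L * (0 - 1))))
        (at s within {t..T})"
      unfolding G_def by (intro DERIV_cmult) simp
    moreover have "- (2 * U / fact (Suc m)) * (real (Suc m) * (2 * L * (T - s)) ^ m * (2 * L * (0 - 1)))
        = 2 * L * picard_bound U m s"
      unfolding picard_bound_def by (simp add: field_simps del: of_nat_Suc)
    ultimately show ?thesis by simp
  qed
  then have "((\<lambda>s. 2 * L * picard_bound U m s) has_integral (G T - G t)) {t..T}"
    using t by (intro fundamental_theorem_of_calculus)
      (auto simp: has_real_derivative_iff_has_vector_derivative[symmetric])
  moreover have "G T - G t = picard_bound U (Suc m) t" unfolding G_def picard_bound_def by simp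
  ultimately show ?thesis by simp
qed

lemma w_iter_error:
  assumes U: "\<And>t y. t \<in> {0..T} \<Longrightarrow> y \<in> E \<Longrightarrow> \<bar>u t y\<bar> \<le> U"
  shows "t \<in> {0..T} \<Longrightarrow> y \<in> E \<Longrightarrow> \<bar>u t y - u t l - w_iter n t y\<bar> \<le> picard_bound U n t"
proof (induction n arbitrary: t y)
  case 0
  then show ?case using U[of t y] U[of t l] l_in_E by (simp add: w_iter_def picard_bound_def)
next
  case (Suc m)
  define v where "v s = (\<lambda>x. w_iter m s x + u s l)" for s
  have v: "C1b_deriv E (v s) (d_iter m s)" if s: "s \<in> {0..T}" for s
    unfolding v_def using w_iter_has_derivative[OF s]
    by (intro admissible_C1b_deriv[OF admissible_d_iter s]) (auto intro!: derivative_eq_intros)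
  have gv: "\<bar>g s (u s) x - g s (v s) x\<bar> \<le> L * picard_bound U m s" if s: "s \<in> {0..T}" and x: "x \<in> E" for s x
  proof -
    have uv: "u s \<in> Cb E" "v s \<in> Cb E"
      using continuous_on_u_slice[OF s] v[OF s] unfolding Cb_def C1b_deriv_def by simp_all
    have "\<bar>g s (u s) x - g s (v s) x\<bar> \<le> supE E (\<lambda>z. g s (u s) z - g s (v s) z)"
      using g_Cb[OF s uv(1)] g_Cb[OF s uv(2)] x
      by (intro abs_le_supE) (auto intro!: continuous_intros simp: Cb_def)
    also have "\<dots> \<le> L * supE E (\<lambda>z. u s z - v s z)" by (rule g_lipschitz[OF s uv])
    also have "supE E (\<lambda>z. u s z - v s z) \<le> picard_bound U m s"
      using Suc.IH[OF s] by (intro supE_least[OF E_ne]) (simp add: v_def algebra_simps)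
    finally show ?thesis using L_nonneg by (simp add: mult_left_mono order_trans)
  qed
  note D = u_increment_minus_Psi[OF admissible_d_iter v Suc.prems]
  note B = picard_bound_has_integral[OF Suc.prems(1), of U m]
  have "norm (integral {t..T} (\<lambda>s. (g s (u s) (Z t y s) - g s (v s) (Z t y s))
      - (g s (u s) (Z t l s) - g s (v s) (Z t l s)))) \<le> integral {t..T} (\<lambda>s. 2 * L * picard_bound U m s)"
  proof (rule integral_norm_bound_integral[OF has_integral_integrable[OF D] has_integral_integrable[OF B]])
    fix s assume "s \<in> {t..T}"
    then show "norm ((g s (u s) (Z t y s) - g s (v s) (Z t y s)) - (g s (u s) (Z t l s) - g s (v s) (Z t l s)))
        \<le> 2 * L * picard_bound U m s"
      using gv[of s "Z t y s"] gv[of s "Z t l s"] Z_in[OF Suc.prems(1,2)] Z_in[OF Suc.prems(1) l_in_E]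
        Suc.prems(1) by fastforce
  qed
  then show ?case using integral_unique[OF D] integral_unique[OF B] by (simp add: w_iter_Suc)
qed

lemma picard_bound_le: "t \<in> {0..T} \<Longrightarrow> 0 \<le> U \<Longrightarrow> picard_bound U n t \<le> picard_bound U n 0"
  unfolding picard_bound_def using L_nonneg
  by (intro divide_right_mono mult_left_mono power_mono) auto

lemma picard_bound_tendsto_0: "(\<lambda>n. picard_bound U n t) \<longlonglongrightarrow> 0"
proof -
  have "(\<lambda>n. 2 * U * (inverse (fact n) * (2 * L * (T - t)) ^ n)) \<longlonglongrightarrow> 2 * U * 0"
    by (intro tendsto_mult tendsto_const summable_LIMSEQ_zero[OF summable_exp])
  then show ?thesis unfolding picard_bound_def by (simp add: field_simps)
qed

end

context transport_problem
begin

lemma d_iter_equicontinuous: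
  assumes "\<eta> > 0"
  obtains \<delta> where "\<delta> > 0" "\<And>n t y y'. t \<in> {0..T} \<Longrightarrow> y \<in> E \<Longrightarrow> y' \<in> E \<Longrightarrow> \<bar>y - y'\<bar> < \<delta> \<Longrightarrow>
      \<bar>d_iter n t y - d_iter n t y'\<bar> \<le> \<eta>"
proof -
  obtain \<delta> where \<delta>: "\<delta> > 0" "\<And>d t y y'. admissible d \<Longrightarrow> t \<in> {0..T} \<Longrightarrow> y \<in> E \<Longrightarrow> y' \<in> E \<Longrightarrow>
      \<bar>y - y'\<bar> < \<delta> \<Longrightarrow> \<bar>Phi d t y - Phi d t y'\<bar> \<le> \<eta>"
    using Phi_equicontinuous[OF assms] by blast
  show thesis
  proof (rule that[OF \<delta>(1)])
    fix n t y y' assume h: "t \<in> {0..T}" "y \<in> E" "y' \<in> E" "\<bar>y - y'\<bar> < \<delta>"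
    show "\<bar>d_iter n t y - d_iter n t y'\<bar> \<le> \<eta>"
    proof (cases n)
      case 0
      then show ?thesis using assms by (simp add: d_iter_def)
    next
      case (Suc m)
      then show ?thesis using \<delta>(2)[OF admissible_d_iter h] by (simp add: d_iter_Suc)
    qed
  qed
qed

lemma w_iter_linear_approx:
  assumes "\<eta> > 0"
  shows "\<exists>\<delta>>0. \<forall>n t y y'. t \<in> {0..T} \<longrightarrow> y \<in> E \<longrightarrow> y' \<in> E \<longrightarrow> \<bar>y' - y\<bar> < \<delta> \<longrightarrow>
     \<bar>w_iter n t y' - w_iter n t y - d_iter n t y * (y' - y)\<bar> \<le> \<eta> * \<bar>y' - y\<bar>"
proof -
  obtain \<delta> where \<delta>: "\<delta> > 0" "\<And>n t y y'. t \<in> {0..T} \<Longrightarrow> y \<in> E \<Longrightarrow> y' \<in> E \<Longrightarrow> \<bar>y - y'\<bar> < \<delta> \<Longrightarrow>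
      \<bar>d_iter n t y - d_iter n t y'\<bar> \<le> \<eta>"
    using d_iter_equicontinuous[OF assms] by blast
  show ?thesis
  proof (intro exI[of _ \<delta>] conjI allI impI \<delta>(1))
    fix n t y y' assume h: "t \<in> {0..T}" "y \<in> E" "y' \<in> E" "\<bar>y' - y\<bar> < \<delta>"
    show "\<bar>w_iter n t y' - w_iter n t y - d_iter n t y * (y' - y)\<bar> \<le> \<eta> * \<bar>y' - y\<bar>"
    proof (rule derivative_remainder_le[of E])
      fix \<xi> assume "\<xi> \<in> E" "\<bar>\<xi> - y\<bar> \<le> \<bar>y' - y\<bar>"
      then show "\<bar>d_iter n t \<xi> - d_iter n t y\<bar> \<le> \<eta>" using \<delta>(2)[of t \<xi> y n] h by simp
    qed (use h w_iter_has_derivative in auto)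
  qed
qed

lemma w_iter_uniform_convergence:
  assumes \<epsilon>: "\<epsilon> > 0"
  shows "\<exists>N. \<forall>n\<ge>N. \<forall>t\<in>{0..T}. \<forall>y\<in>E. \<bar>(u t y - u t l) - w_iter n t y\<bar> \<le> \<epsilon>"
proof -
  obtain U where U: "\<And>t y. t \<in> {0..T} \<Longrightarrow> y \<in> E \<Longrightarrow> \<bar>u t y\<bar> \<le> U" using u_bounded by blast
  have U0: "0 \<le> U" using U[of 0 l] T_pos l_in_E by force
  obtain N where N: "\<forall>n\<ge>N. dist (picard_bound U n 0) 0 < \<epsilon>"
    using picard_bound_tendsto_0[of U 0] \<epsilon> unfolding lim_sequentially by blast
  show ?thesis
  proof (intro exI[of _ N] allI impI ballI)
    fix n t y assume n: "N \<le> n" and t: "t \<in> {0..T}" and y: "y \<in> E"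
    have "\<bar>(u t y - u t l) - w_iter n t y\<bar> \<le> picard_bound U n 0"
      using w_iter_error[OF U t y, of n] picard_bound_le[OF t U0, of n] by simp
    also have "\<dots> \<le> \<epsilon>" using N n by (force simp: dist_real_def)
    finally show "\<bar>(u t y - u t l) - w_iter n t y\<bar> \<le> \<epsilon>" .
  qed
qed

lemma w_iter_tendsto:
  assumes "t \<in> {0..T}" "y \<in> E"
  shows "(\<lambda>n. w_iter n t y) \<longlonglongrightarrow> u t y - u t l"
proof -
  obtain U where U: "\<And>t y. t \<in> {0..T} \<Longrightarrow> y \<in> E \<Longrightarrow> \<bar>u t y\<bar> \<le> U" using u_bounded by blast
  have "(\<lambda>n. w_iter n t y - (u t y - u t l)) \<longlonglongrightarrow> 0"
    by (rule Lim_null_comparison[OF _ picard_bound_tendsto_0[of U t]])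
       (use w_iter_error[OF U assms] in \<open>simp add: abs_minus_commute\<close>)
  then show ?thesis by (rule Lim_transform[OF tendsto_const])
qed

lemma admissible_uniform_limit:
  assumes "uniform_limit ({0..T} \<times> E) (\<lambda>n p. d n (fst p) (snd p)) D sequentially"
    and "\<And>n. admissible (d n)"
  shows "admissible (\<lambda>t y. D (t, y))"
proof -
  have "continuous_on ({0..T} \<times> E) D"
    by (rule uniform_limit_theorem[OF _ assms(1)])
       (use assms(2) in \<open>simp_all add: admissible_def case_prod_beta\<close>)
  moreover have "\<bar>D (s, x)\<bar> \<le> A0 * exp (growth * (T - s))" if "s \<in> {0..T}" "x \<in> E" for s x
    using tendsto_uniform_limitI[OF assms(1), of "(s, x)"] assms(2) that
    by (intro LIMSEQ_le_const2[OF tendsto_rabs]) (auto simp: admissible_def)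
  ultimately show ?thesis unfolding admissible_def by (simp add: case_prod_beta)
qed

lemma u_differentiable:
  obtains uz where "admissible uz"
    "\<And>t y. t \<in> {0..T} \<Longrightarrow> y \<in> E \<Longrightarrow> (u t has_real_derivative uz t y) (at y within E)"
proof -
  obtain D where D: "uniform_limit ({0..T} \<times> E) (\<lambda>n p. d_iter n (fst p) (snd p)) D sequentially"
    using Cauchy_uniformly_convergent[OF uniformly_Cauchy_on_derivatives[OF lr w_iter_linear_approx
          w_iter_uniform_convergence]]
    unfolding uniformly_convergent_on_def by blast
  have "(u t has_real_derivative D (t, y)) (at y within E)" if t: "t \<in> {0..T}" and y: "y \<in> E" for t y
  proof -
    have "((\<lambda>x. u t x - u t l) has_real_derivative D (t, y)) (at y within E)"
    proof (rule has_real_derivative_of_uniform_remainder_limit[OF w_iter_tendsto[OF t] _ y])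
      show "(\<lambda>n. d_iter n t y) \<longlonglongrightarrow> D (t, y)" using tendsto_uniform_limitI[OF D, of "(t, y)"] t y by simp
      fix \<eta> :: real assume "\<eta> > 0"
      then obtain \<delta> where "\<delta> > 0" "\<forall>n t y y'. t \<in> {0..T} \<longrightarrow> y \<in> E \<longrightarrow> y' \<in> E \<longrightarrow>
          \<bar>y' - y\<bar> < \<delta> \<longrightarrow> \<bar>w_iter n t y' - w_iter n t y - d_iter n t y * (y' - y)\<bar> \<le> \<eta> * \<bar>y' - y\<bar>"
        using w_iter_linear_approx by blast
      then show "\<exists>\<delta>>0. \<forall>n. \<forall>y'\<in>E. \<bar>y' - y\<bar> < \<delta> \<longrightarrow>
          \<bar>w_iter n t y' - w_iter n t y - d_iter n t y * (y' - y)\<bar> \<le> \<eta> * \<bar>y' - y\<bar>"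
        using t y by auto
    qed
    from DERIV_add[OF this DERIV_const[of "u t l"]] show ?thesis by simp
  qed
  with admissible_uniform_limit[OF D admissible_d_iter] show thesis by (rule that)
qed

end

section \<open>The strong solution\<close>

context transport_problem
begin

lemma u_at_T: "z \<in> E \<Longrightarrow> u T z = h z"
  using integral_unique[OF u_repr[of T z]] Z_start[of T z] T_pos by simp

lemma u_repr_intermediate:
  assumes t: "t \<in> {0..T}" and z: "z \<in> E" and \<tau>: "\<tau> \<in> {t..T}"
  shows "((\<lambda>s. g s (u s) (Z t z s)) has_integral (u t z - u \<tau> (Z t z \<tau>))) {t..\<tau>}"
proof -
  define X where "X = Z t z \<tau>"
  have \<tau>0: "\<tau> \<in> {0..T}" and X: "X \<in> E" using t \<tau> Z_in[OF t z \<tau>] by (auto simp: X_def)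
  note A = u_repr[OF t z]
  have flow: "Z \<tau> X s = Z t z s" if "s \<in> {\<tau>..T}" for s unfolding X_def by (rule Z_flow[OF t z \<tau> that])
  have "((\<lambda>s. g s (u s) (Z \<tau> X s)) has_integral (u \<tau> X - h (Z t z T))) {\<tau>..T}"
    using u_repr[OF \<tau>0 X] flow[of T] \<tau> by simp
  then have B: "((\<lambda>s. g s (u s) (Z t z s)) has_integral (u \<tau> X - h (Z t z T))) {\<tau>..T}"
    by (rule has_integral_eq[rotated]) (simp add: flow)
  have iA: "(\<lambda>s. g s (u s) (Z t z s)) integrable_on {t..\<tau>}"
    by (rule integrable_subinterval_real[OF has_integral_integrable[OF A]]) (use \<tau> in auto)
  have "integral {t..\<tau>} (\<lambda>s. g s (u s) (Z t z s)) + integral {\<tau>..T} (\<lambda>s. g s (u s) (Z t z s))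
      = integral {t..T} (\<lambda>s. g s (u s) (Z t z s))"
    by (rule Henstock_Kurzweil_Integration.integral_combine) (use \<tau> A in auto)
  then have "integral {t..\<tau>} (\<lambda>s. g s (u s) (Z t z s)) = u t z - u \<tau> X"
    using integral_unique[OF A] integral_unique[OF B] by simp
  then show ?thesis unfolding X_def[symmetric] using iA by (metis has_integral_integral)
qed

definition "strong_defect uz z t = u t z - h z - integral {t..T} (\<lambda>s. b s z * uz s z + g s (u s) z)"

context
  fixes uz assumes uz: "admissible uz"
    and du: "\<And>t y. t \<in> {0..T} \<Longrightarrow> y \<in> E \<Longrightarrow> (u t has_real_derivative uz t y) (at y within E)"
begin

lemma u_C1b_deriv: "s \<in> {0..T} \<Longrightarrow> C1b_deriv E (u s) (uz s)"
  by (rule admissible_C1b_deriv[OF uz]) (auto intro: du)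

lemma g_u_increment:
  assumes "s \<in> {0..T}" "x \<in> E" "x' \<in> E"
  shows "g s (u s) x - g s (u s) x' = Ghat uz s x - Ghat uz s x'"
proof -
  note eq = g_increment_eq_Ghat[OF uz assms(1) u_C1b_deriv[OF assms(1)]]
  show ?thesis using eq[OF assms(2)] eq[OF assms(3)] by simp
qed

lemma g_u_integrable:
  assumes t: "t \<in> {0..T}" and z: "z \<in> E" and \<tau>: "\<tau> \<in> {t..T}"
  shows "(\<lambda>s. g s (u s) z) integrable_on {t..\<tau>}"
proof -
  have "continuous_on {t..T} (\<lambda>s. Ghat uz s (Z t z s))"
    by (rule continuous_on_compose_Z[OF continuous_on_Ghat[OF uz] t z])
  moreover have "continuous_on {t..T} (\<lambda>s. Ghat uz s z)"
    by (rule continuous_on_compose_graph[OF continuous_on_Ghat[OF uz] continuous_on_const]) (use t z in auto)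
  ultimately have "(\<lambda>s. Ghat uz s (Z t z s) - Ghat uz s z) integrable_on {t..\<tau>}"
    using \<tau> by (intro continuous_on_imp_integrable_on_subinterval[of t T] continuous_on_diff) auto
  then have "(\<lambda>s. g s (u s) (Z t z s) - (Ghat uz s (Z t z s) - Ghat uz s z)) integrable_on {t..\<tau>}"
    by (rule integrable_diff[OF has_integral_integrable[OF u_repr_intermediate[OF t z \<tau>]]])
  moreover have "g s (u s) (Z t z s) - (Ghat uz s (Z t z s) - Ghat uz s z) = g s (u s) z"
    if "s \<in> {t..\<tau>}" for s
    using g_u_increment[of s "Z t z s" z] Z_in[OF t z] that t \<tau> z by auto
  ultimately show ?thesis by (rule integrable_eq)
qed

lemma continuous_on_b_uz:
  assumes "t \<in> {0..T}" "z \<in> E"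
  shows "continuous_on {t..T} (\<lambda>s. b s z * uz s z)"
  using continuous_on_compose_graph[OF b_cont continuous_on_const, of "{t..T}" z]
    continuous_on_compose_graph[of "{0..T}" E "\<lambda>s x. uz s x", OF _ continuous_on_const, of "{t..T}" z]
    uz assms unfolding admissible_def by (auto intro: continuous_on_mult)

lemma strong_integrand_integrable:
  assumes "t \<in> {0..T}" "z \<in> E" "\<tau> \<in> {t..T}"
  shows "(\<lambda>s. b s z * uz s z + g s (u s) z) integrable_on {t..\<tau>}"
  by (rule integrable_add[OF continuous_on_imp_integrable_on_subinterval[OF continuous_on_b_uz[OF assms(1,2)]]
        g_u_integrable[OF assms]]) (use assms(3) in auto)

lemma strong_defect_increment:
  assumes t: "t \<in> {0..T}" and z: "z \<in> E" and \<tau>: "\<tau> \<in> {t..T}"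
  shows "((\<lambda>s. uz \<tau> z * b s (Z t z s) - b s z * uz s z + (g s (u s) (Z t z s) - g s (u s) z)) has_integral
    (strong_defect uz z t - strong_defect uz z \<tau> - (u \<tau> (Z t z \<tau>) - u \<tau> z - uz \<tau> z * (Z t z \<tau> - z)))) {t..\<tau>}"
proof -
  have Ib: "((\<lambda>s. b s (Z t z s)) has_integral (Z t z \<tau> - z)) {t..\<tau>}" by (rule Z_ode[OF t z \<tau>])
  have Ibu: "((\<lambda>s. b s z * uz s z) has_integral integral {t..\<tau>} (\<lambda>s. b s z * uz s z)) {t..\<tau>}"
    using continuous_on_b_uz[OF t z] \<tau>
    by (intro integrable_integral continuous_on_imp_integrable_on_subinterval[of t T]) auto
  have Igz: "((\<lambda>s. g s (u s) z) has_integral integral {t..\<tau>} (\<lambda>s. g s (u s) z)) {t..\<tau>}"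
    by (rule integrable_integral[OF g_u_integrable[OF t z \<tau>]])
  define F where "F s = b s z * uz s z + g s (u s) z" for s
  define J1 J2 J3 where "J1 = integral {t..\<tau>} (\<lambda>s. b s z * uz s z)"
    and "J2 = integral {t..\<tau>} (\<lambda>s. g s (u s) z)" and "J3 = integral {\<tau>..T} F"
  have "integral {t..\<tau>} F + integral {\<tau>..T} F = integral {t..T} F"
    using Henstock_Kurzweil_Integration.integral_combine[OF _ _ strong_integrand_integrable[OF t z, of T]] t \<tau>
    unfolding F_def by simp
  moreover have "integral {t..\<tau>} F = J1 + J2"
    unfolding F_def J1_def J2_def
    using integral_add[OF has_integral_integrable[OF Ibu] has_integral_integrable[OF Igz]] .
  ultimately have "strong_defect uz z t - strong_defect uz z \<tau> = u t z - u \<tau> z - J1 - J2"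
    unfolding strong_defect_def F_def[symmetric] J3_def[symmetric] by simp
  then have eq: "uz \<tau> z * (Z t z \<tau> - z) - J1 + ((u t z - u \<tau> (Z t z \<tau>)) - J2)
      = strong_defect uz z t - strong_defect uz z \<tau> - (u \<tau> (Z t z \<tau>) - u \<tau> z - uz \<tau> z * (Z t z \<tau> - z))"
    by simp
  show ?thesis
    unfolding eq[symmetric] J1_def J2_def
    by (rule has_integral_add[OF has_integral_diff[OF has_integral_mult_right[OF Ib] Ibu]
          has_integral_diff[OF u_repr_intermediate[OF t z \<tau>] Igz]])
qed

lemma strong_integrand_le:
  assumes t: "t \<in> {0..T}" and z: "z \<in> E" and \<tau>: "\<tau> \<in> {t..T}" and s: "s \<in> {t..\<tau>}"
  shows "\<bar>uz \<tau> z * b s (Z t z s) - b s z * uz s z + (g s (u s) (Z t z s) - g s (u s) z)\<bar>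
    \<le> (R0 * Mb + ghat_max) * B * (s - t) + B * \<bar>uz \<tau> z - uz s z\<bar>"
proof -
  have s0: "s \<in> {0..T}" "s \<in> {t..T}" and \<tau>0: "\<tau> \<in> {0..T}" using s t \<tau> by auto
  have Zs: "Z t z s \<in> E" by (rule Z_in[OF t z s0(2)])
  have Zz: "\<bar>Z t z s - z\<bar> \<le> B * (s - t)"
    using Z_lipschitz_time[OF t z s0(2), of t] Z_start[OF t z] s0 by simp
  have tri: "\<bar>a * x + c * y + w\<bar> \<le> \<bar>a\<bar> * \<bar>x\<bar> + \<bar>c\<bar> * \<bar>y\<bar> + \<bar>w\<bar>" for a x c y w :: real
    using abs_triangle_ineq[of "a * x + c * y" w] abs_triangle_ineq[of "a * x" "c * y"]
    unfolding abs_mult by linarith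
  have "\<bar>uz \<tau> z * b s (Z t z s) - b s z * uz s z + (g s (u s) (Z t z s) - g s (u s) z)\<bar>
      = \<bar>uz \<tau> z * (b s (Z t z s) - b s z) + b s z * (uz \<tau> z - uz s z) + (g s (u s) (Z t z s) - g s (u s) z)\<bar>"
    by (simp add: algebra_simps)
  also have "\<dots> \<le> \<bar>uz \<tau> z\<bar> * \<bar>b s (Z t z s) - b s z\<bar> + \<bar>b s z\<bar> * \<bar>uz \<tau> z - uz s z\<bar>
        + \<bar>g s (u s) (Z t z s) - g s (u s) z\<bar>"
    by (rule tri)
  also have "\<dots> \<le> R0 * (Mb * (B * (s - t))) + B * \<bar>uz \<tau> z - uz s z\<bar> + ghat_max * (B * (s - t))"
  proof (intro add_mono mult_mono)
    show "\<bar>uz \<tau> z\<bar> \<le> R0" by (rule admissible_abs_le[OF uz \<tau>0 z])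
    have "\<bar>b s (Z t z s) - b s z\<bar> \<le> Mb * \<bar>Z t z s - z\<bar>" by (rule b_lipschitz[OF s0(1) Zs z])
    also have "\<dots> \<le> Mb * (B * (s - t))" by (rule mult_left_mono[OF Zz Mb_nonneg])
    finally show "\<bar>b s (Z t z s) - b s z\<bar> \<le> Mb * (B * (s - t))" .
    show "\<bar>b s z\<bar> \<le> B" by (rule b_bound[OF s0(1) z])
    have "\<bar>g s (u s) (Z t z s) - g s (u s) z\<bar> \<le> ghat_max * \<bar>Z t z s - z\<bar>"
      unfolding g_u_increment[OF s0(1) Zs z] by (rule Ghat_lipschitz[OF uz s0(1) Zs z])
    also have "\<dots> \<le> ghat_max * (B * (s - t))" by (rule mult_left_mono[OF Zz ghat_max_nonneg])
    finally show "\<bar>g s (u s) (Z t z s) - g s (u s) z\<bar> \<le> ghat_max * (B * (s - t))" .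
  qed (use R0_pos B_nonneg in auto)
  also have "\<dots> = (R0 * Mb + ghat_max) * B * (s - t) + B * \<bar>uz \<tau> z - uz s z\<bar>"
    by (simp add: algebra_simps)
  finally show ?thesis .
qed

lemma strong_defect_increment_le:
  assumes t: "t \<in> {0..T}" and z: "z \<in> E" and \<tau>: "\<tau> \<in> {t..T}" and \<eta>: "0 \<le> \<eta>"
    and osc_space: "\<And>\<xi>. \<xi> \<in> E \<Longrightarrow> \<bar>\<xi> - z\<bar> \<le> \<bar>Z t z \<tau> - z\<bar> \<Longrightarrow> \<bar>uz \<tau> \<xi> - uz \<tau> z\<bar> \<le> \<eta>"
    and osc_time: "\<And>s. s \<in> {t..\<tau>} \<Longrightarrow> \<bar>uz \<tau> z - uz s z\<bar> \<le> \<eta>"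
  shows "\<bar>strong_defect uz z t - strong_defect uz z \<tau>\<bar>
    \<le> ((R0 * Mb + ghat_max) * B * (\<tau> - t) + 2 * B * \<eta>) * (\<tau> - t)"
proof -
  have \<tau>0: "\<tau> \<in> {0..T}" using t \<tau> by auto
  define X where "X = Z t z \<tau>"
  have X: "X \<in> E" "\<bar>X - z\<bar> \<le> B * (\<tau> - t)"
    using Z_in[OF t z \<tau>] Z_lipschitz_time[OF t z \<tau>, of t] Z_start[OF t z] \<tau> by (auto simp: X_def)
  have "\<bar>u \<tau> X - u \<tau> z - uz \<tau> z * (X - z)\<bar> \<le> \<eta> * \<bar>X - z\<bar>"
    by (rule derivative_remainder_le[of E]) (use du \<tau>0 z X osc_space in \<open>auto simp: X_def\<close>)
  also have "\<dots> \<le> B * \<eta> * (\<tau> - t)" using mult_left_mono[OF X(2) \<eta>] by (simp add: algebra_simps)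
  finally have A: "\<bar>u \<tau> X - u \<tau> z - uz \<tau> z * (X - z)\<bar> \<le> B * \<eta> * (\<tau> - t)" .
  note I = strong_defect_increment[OF t z \<tau>, folded X_def]
  have "\<bar>strong_defect uz z t - strong_defect uz z \<tau> - (u \<tau> X - u \<tau> z - uz \<tau> z * (X - z))\<bar>
      \<le> ((R0 * Mb + ghat_max) * B * (\<tau> - t) + B * \<eta>) * (\<tau> - t)"
    unfolding integral_unique[OF I, symmetric]
  proof (rule abs_integral_le[OF _ has_integral_integrable[OF I]])
    fix s assume s: "s \<in> {t..\<tau>}"
    have "(R0 * Mb + ghat_max) * B * (s - t) \<le> (R0 * Mb + ghat_max) * B * (\<tau> - t)"
      using s R0_pos Mb_nonneg B_nonneg ghat_max_nonneg by (intro mult_left_mono) auto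
    moreover have "B * \<bar>uz \<tau> z - uz s z\<bar> \<le> B * \<eta>" by (rule mult_left_mono[OF osc_time[OF s] B_nonneg])
    ultimately show "\<bar>uz \<tau> z * b s (Z t z s) - b s z * uz s z + (g s (u s) (Z t z s) - g s (u s) z)\<bar>
        \<le> (R0 * Mb + ghat_max) * B * (\<tau> - t) + B * \<eta>"
      using strong_integrand_le[OF t z \<tau> s] by linarith
  qed (use \<tau> in auto)
  moreover have "((R0 * Mb + ghat_max) * B * (\<tau> - t) + B * \<eta>) * (\<tau> - t) + B * \<eta> * (\<tau> - t)
      = ((R0 * Mb + ghat_max) * B * (\<tau> - t) + 2 * B * \<eta>) * (\<tau> - t)"
    by (simp add: algebra_simps)
  ultimately show ?thesis using A by linarith
qed

lemma strong_defect_locally_flat: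
  assumes z: "z \<in> E" and \<eta>: "\<eta> > 0"
  shows "\<exists>\<delta>>0. \<forall>t \<tau>. t \<in> {0..T} \<longrightarrow> \<tau> \<in> {t..T} \<longrightarrow> \<tau> - t < \<delta> \<longrightarrow>
    \<bar>strong_defect uz z t - strong_defect uz z \<tau>\<bar> \<le> \<eta> * (\<tau> - t)"
proof -
  define C where "C = (R0 * Mb + ghat_max) * B"
  have C: "0 \<le> C" unfolding C_def using R0_pos Mb_nonneg B_nonneg ghat_max_nonneg by simp
  define \<eta>1 where "\<eta>1 = \<eta> / (4 * (B + 1))"
  have \<eta>1: "\<eta>1 > 0" "2 * B * \<eta>1 \<le> \<eta> / 2" unfolding \<eta>1_def using \<eta> B_nonneg by (simp_all add: field_simps)
  have "continuous_on ({0..T} \<times> E) (\<lambda>(s, x). uz s x)" using uz unfolding admissible_def by simp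
  then obtain \<delta>1 where \<delta>1: "\<delta>1 > 0" "\<And>a b a' b'. (a, b) \<in> {0..T} \<times> E \<Longrightarrow> (a', b') \<in> {0..T} \<times> E \<Longrightarrow>
      \<bar>a - a'\<bar> < \<delta>1 \<Longrightarrow> \<bar>b - b'\<bar> < \<delta>1 \<Longrightarrow> \<bar>(\<lambda>(s, x). uz s x) (a, b) - (\<lambda>(s, x). uz s x) (a', b')\<bar> < \<eta>1"
    using compact_uniformly_continuous_pairE[OF compact_Times[OF compact_Icc compact_Icc] _ \<eta>1(1)] by blast
  define \<delta> where "\<delta> = min (\<delta>1 / (B + 1)) (\<eta> / (2 * (C + 1)))"
  have \<delta>: "\<delta> > 0" "B * \<delta> < \<delta>1" "\<delta> \<le> \<delta>1" "C * \<delta> \<le> \<eta> / 2"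
  proof -
    show "\<delta> > 0" unfolding \<delta>_def using \<delta>1(1) B_nonneg \<eta> C by simp
    have "B * \<delta> \<le> B * (\<delta>1 / (B + 1))" "C * \<delta> \<le> C * (\<eta> / (2 * (C + 1)))"
      unfolding \<delta>_def using B_nonneg C by (intro mult_left_mono; simp)+
    moreover have "B * (\<delta>1 / (B + 1)) < \<delta>1" "\<delta>1 / (B + 1) \<le> \<delta>1" "C * (\<eta> / (2 * (C + 1))) \<le> \<eta> / 2"
      using \<delta>1(1) B_nonneg C \<eta> by (simp_all add: field_simps)
    moreover have "\<delta> \<le> \<delta>1 / (B + 1)" unfolding \<delta>_def by simp
    ultimately show "B * \<delta> < \<delta>1" "\<delta> \<le> \<delta>1" "C * \<delta> \<le> \<eta> / 2" by linarith+
  qed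
  show ?thesis
  proof (intro exI[of _ \<delta>] conjI allI impI \<delta>(1))
    fix t \<tau> assume t: "t \<in> {0..T}" and \<tau>: "\<tau> \<in> {t..T}" and t\<tau>: "\<tau> - t < \<delta>"
    have \<tau>0: "\<tau> \<in> {0..T}" using t \<tau> by auto
    have "\<bar>Z t z \<tau> - z\<bar> \<le> B * (\<tau> - t)"
      using Z_lipschitz_time[OF t z \<tau>, of t] Z_start[OF t z] \<tau> by simp
    also have "\<dots> \<le> B * \<delta>" using t\<tau> B_nonneg by (intro mult_left_mono) auto
    finally have Z\<delta>: "\<bar>Z t z \<tau> - z\<bar> < \<delta>1" using \<delta>(2) by linarith
    have "\<bar>strong_defect uz z t - strong_defect uz z \<tau>\<bar> \<le> (C * (\<tau> - t) + 2 * B * \<eta>1) * (\<tau> - t)"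
      unfolding C_def
    proof (rule strong_defect_increment_le[OF t z \<tau> less_imp_le[OF \<eta>1(1)]])
      fix \<xi> assume "\<xi> \<in> E" "\<bar>\<xi> - z\<bar> \<le> \<bar>Z t z \<tau> - z\<bar>"
      then show "\<bar>uz \<tau> \<xi> - uz \<tau> z\<bar> \<le> \<eta>1" using \<delta>1(2)[of \<tau> \<xi> \<tau> z] \<tau>0 z Z\<delta> \<delta>1(1) by simp
    next
      fix s assume "s \<in> {t..\<tau>}"
      then show "\<bar>uz \<tau> z - uz s z\<bar> \<le> \<eta>1" using \<delta>1(2)[of \<tau> z s z] \<tau>0 t z t\<tau> \<delta>(3) by simp
    qed
    also have "\<dots> \<le> (\<eta> / 2 + \<eta> / 2) * (\<tau> - t)"
      using mult_left_mono[of "\<tau> - t" \<delta> C] C t\<tau> \<delta>(4) \<eta>1(2) \<tau> by (intro mult_right_mono) auto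
    finally show "\<bar>strong_defect uz z t - strong_defect uz z \<tau>\<bar> \<le> \<eta> * (\<tau> - t)" by simp
  qed
qed

lemma strong_solution:
  assumes t: "t \<in> {0..T}" and z: "z \<in> E"
  shows "((\<lambda>s. b s z * uz s z + g s (u s) z) has_integral (u t z - h z)) {t..T}"
proof -
  have "strong_defect uz z t = strong_defect uz z T"
    by (rule constant_on_interval_if_locally_flat[OF strong_defect_locally_flat[OF z]])
       (use t T_pos in auto)
  also have "\<dots> = 0" using u_at_T[OF z] by (simp add: strong_defect_def)
  finally have "integral {t..T} (\<lambda>s. b s z * uz s z + g s (u s) z) = u t z - h z"
    unfolding strong_defect_def by simp
  with integrable_integral[OF strong_integrand_integrable[OF t z, of T]] show ?thesis
    using t by simp
qed

end

end

theorem theorem3p7: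
  fixes T l r L L' K :: real
    and b bz :: "real \<Rightarrow> real \<Rightarrow> real"
    and Z :: "real \<Rightarrow> real \<Rightarrow> real \<Rightarrow> real"
    and g ghat :: "real \<Rightarrow> (real \<Rightarrow> real) \<Rightarrow> (real \<Rightarrow> real)"
    and h :: "real \<Rightarrow> real"
    and u :: "real \<Rightarrow> real \<Rightarrow> real"
  defines "E \<equiv> {l..r}"
  assumes lr: "l < r" and T: "0 < T"
    \<comment> \<open>b continuous; the characteristics Z stay in E and solve the ODE\<close>
    and b_cont: "continuous_on ({0..T} \<times> E) (\<lambda>(t, z). b t z)"
    and Z_in: "\<forall>t\<in>{0..T}. \<forall>z\<in>E. \<forall>s\<in>{t..T}. Z t z s \<in> E"
    and Z_ode: "\<forall>t\<in>{0..T}. \<forall>z\<in>E. \<forall>s\<in>{t..T}.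
                  ((\<lambda>r. b r (Z t z r)) has_integral (Z t z s - z)) {t..s}"
    \<comment> \<open>(a-1)\<close>
    and a1: "local_lipschitz {0..T} E b"
    \<comment> \<open>(a-2)\<close>
    and g_Cb: "\<forall>t\<in>{0..T}. \<forall>v\<in>Cb E. g t v \<in> Cb E"
    and a2: "\<forall>t\<in>{0..T}. \<forall>v1\<in>Cb E. \<forall>v2\<in>Cb E.
               supE E (\<lambda>z. g t v1 z - g t v2 z) \<le> L * supE E (\<lambda>z. v1 z - v2 z)"
    \<comment> \<open>(a-3)\<close>
    and a3: "h \<in> Cb E"
    \<comment> \<open>(b-1)\<close>
    and b1_deriv: "\<forall>t\<in>{0..T}. \<forall>z\<in>E. (b t has_real_derivative bz t z) (at z within E)"
    and b1_cont: "continuous_on ({0..T} \<times> E) (\<lambda>(t, z). bz t z)"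
    and b1_bdd: "\<exists>M. \<forall>t\<in>{0..T}. \<forall>z\<in>E. \<bar>bz t z\<bar> \<le> M"
    \<comment> \<open>(b-2)\<close>
    and ghat_Cb: "\<forall>t\<in>{0..T}. \<forall>v\<in>Cb E. ghat t v \<in> Cb E"
    and b2_deriv: "\<forall>t\<in>{0..T}. \<forall>v v'. C1b_deriv E v v' \<longrightarrow>
               (\<forall>z\<in>E. (g t v has_real_derivative ghat t v' z) (at z within E))"
    and ghat_cont: "\<forall>t\<in>{0..T}. \<forall>v\<in>Cb E. \<forall>\<epsilon>>0. \<exists>\<delta>>0. \<forall>t'\<in>{0..T}. \<forall>v'\<in>Cb E.
               \<bar>t' - t\<bar> < \<delta> \<and> supE E (\<lambda>z. v' z - v z) < \<delta> \<longrightarrow>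
               supE E (\<lambda>z. ghat t' v' z - ghat t v z) < \<epsilon>"
    and ghat_bound: "\<forall>s\<in>{0..T}. \<forall>v\<in>Cb E. supE E (ghat s v) \<le> L' * supE E v + K"
    and ghat_unif: "\<forall>R>0. \<forall>\<epsilon>>0. \<exists>\<delta>>0.
               \<forall>t\<in>{0..T}. \<forall>t'\<in>{0..T}. \<forall>v\<in>Cb E. \<forall>v'\<in>Cb E. \<forall>z\<in>E. \<forall>z'\<in>E.
               supE E v \<le> R \<and> supE E v' \<le> R \<and>
               \<bar>t - t'\<bar> < \<delta> \<and> supE E (\<lambda>y. v y - v' y) < \<delta> \<and> \<bar>z - z'\<bar> < \<delta> \<longrightarrow>
               \<bar>ghat t v z - ghat t' v' z'\<bar> < \<epsilon>"
    \<comment> \<open>(b-3)\<close>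
    and b3: "\<exists>h'. C1b_deriv E h h'"
    \<comment> \<open>u is the (weak) solution given by the representation formula\<close>
    and u_cont: "continuous_on ({0..T} \<times> E) (\<lambda>(t, z). u t z)"
    and u_repr: "\<forall>t\<in>{0..T}. \<forall>z\<in>E.
               ((\<lambda>s. g s (u s) (Z t z s)) has_integral (u t z - h (Z t z T))) {t..T}"
  shows "\<exists>uz. (\<forall>t\<in>{0..T}. \<forall>z\<in>E. ((\<lambda>y. u t y) has_real_derivative uz t z) (at z within E))
             \<and> (\<forall>t\<in>{0..T}. \<forall>z\<in>E.
                  ((\<lambda>s. b s z * uz s z + g s (u s) z) has_integral (u t z - h z)) {t..T})"
proof -
  obtain B where B: "\<And>t z. t \<in> {0..T} \<Longrightarrow> z \<in> E \<Longrightarrow> \<bar>b t z\<bar> \<le> B"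
    using compact_imp_bounded[OF compact_continuous_image[OF b_cont]] unfolding bounded_iff E_def
    by (force simp: compact_Times)
  obtain Mb where Mb: "\<And>t z. t \<in> {0..T} \<Longrightarrow> z \<in> E \<Longrightarrow> \<bar>bz t z\<bar> \<le> Mb" using b1_bdd by blast
  obtain h' where h': "C1b_deriv E h h'" using b3 by blast
  then obtain H1 where H1: "\<And>z. z \<in> E \<Longrightarrow> \<bar>h' z\<bar> \<le> H1" unfolding C1b_deriv_def by blast
  note hyps = lr T b_cont B Mb b1_deriv b1_cont Z_in Z_ode g_Cb a2 ghat_Cb b2_deriv ghat_bound h' H1
    u_cont u_repr
  interpret transport_problem T l r B Mb b bz Z L L' K H1 g ghat h h' u
    by unfold_locales (fact hyps[unfolded E_def, rule_format] ghat_unif[unfolded E_def])+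
  obtain uz where uz: "admissible uz"
    and du: "\<And>t y. t \<in> {0..T} \<Longrightarrow> y \<in> E \<Longrightarrow> (u t has_real_derivative uz t y) (at y within E)"
    using u_differentiable unfolding E_def by blast
  show ?thesis
    using du strong_solution[OF uz du[unfolded E_def]] unfolding E_def by blast
qed

end
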